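(* For every integer $n \geq 3$, the number $c_4(n)$ of cyclic permutations of length $n$ in the $\sigma$-class with signature $\sigma_4 = -+-$ satisfies \[ c_4(n) = \frac{L_3^*(n;\sigma_4)}{4}. \]
   Context: $\mathcal S_n$ is the set of permutations of $[n]=\{1,\dots,n\}$, written in one-line notation $\pi=\pi_1\cdots\pi_n$. A permutation is cyclic if its cycle decomposition consists of a single $n$-cycle; $\mathcal C_n$ is the set of cyclic permutations in $\mathcal S_n$. For a signature $\sigma=\sigma^0\sigma^1\cdots\sigma^{k-1}\in\{+,-\}^k$, the $\sigma$-class $\mathcal S^\sigma_n$ is the set of $\pi\in\mathcal S_n$ for which there exist integers $0=e_0\le e_1\le\cdots\le e_k=n$ such that for each $i\in\{0,\dots,k-1\}$ the segment $\pi_{e_i+1}\cdots\pi_{e_{i+1}}$ is increasing if $\sigma^i=+$ and decreasing if $\sigma^i=-$. Set $\mathcal C_n^\sigma=\mathcal C_n\cap\mathcal S_n^\sigma$ and $c_4(n)=|\mathcal C_n^{-+-}|$. A word of length $m$ on $k$ letters is a sequence $s=s_1\cdots s_m$ with $s_j\in\{0,1,\dots,k-1\}$; it is primitive if it is not of the form $q^r$ for any $r>1$. A necklace is an equivalence class of words under cyclic rotation; it is primitive if its representatives are primitive. $L_k(m)$ denotes the number of primitive necklaces of length $m$ on $k$ letters. For $\sigma\in\{+,-\}^k$ let $T_\sigma^-=\{i:\sigma^i=-\}$ and $o_\sigma(s)=|\{j: s_j\in T_\sigma^-\}|$. $L_k(m;\sigma)$ denotes the number of primitive necklaces of length $m$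 on $k$ letters whose representatives $s$ have $o_\sigma(s)$ odd, with $L_k(m;\sigma)=0$ if $m$ is not an integer. $L_k^*(n;\sigma)=L_k(n)+L_k(\tfrac n2;\sigma)$. *)

theory Defs
  imports Complex_Main "HOL-Combinatorics.Permutations"
begin

datatype sign = Plus | Minus

text \<open>Permutations of [n] = {1..n}; pi is a function with pi permutes {1..n},
  and the one-line notation is pi 1, ..., pi n.\<close>

definition cyclic_perm :: "nat \<Rightarrow> (nat \<Rightarrow> nat) \<Rightarrow> bool" where
  "cyclic_perm n \<pi> \<longleftrightarrow> \<pi> permutes {1..n} \<and>
     (\<forall>x\<in>{1..n}. \<forall>y\<in>{1..n}. \<exists>j. (\<pi> ^^ j) x = y)"

definition in_sigma_class :: "sign list \<Rightarrow> nat \<Rightarrow> (nat \<Rightarrow> nat) \<Rightarrow> bool" where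
  "in_sigma_class \<sigma> n \<pi> \<longleftrightarrow> \<pi> permutes {1..n} \<and>
     (\<exists>e :: nat \<Rightarrow> nat. e 0 = 0 \<and> e (length \<sigma>) = n \<and>
        (\<forall>i < length \<sigma>. e i \<le> e (Suc i)) \<and>
        (\<forall>i < length \<sigma>. \<forall>j j'. e i < j \<and> j < j' \<and> j' \<le> e (Suc i) \<longrightarrow>
            (if \<sigma> ! i = Plus then \<pi> j < \<pi> j' else \<pi> j > \<pi> j')))"

definition cyc_class :: "sign list \<Rightarrow> nat \<Rightarrow> (nat \<Rightarrow> nat) set" where
  "cyc_class \<sigma> n = {\<pi>. cyclic_perm n \<pi> \<and> in_sigma_class \<sigma> n \<pi>}"

definition c4 :: "nat \<Rightarrow> nat" where
  "c4 n = card (cyc_class [Minus, Plus, Minus] n)"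

definition words :: "nat \<Rightarrow> nat \<Rightarrow> nat list set" where
  "words k m = {s. length s = m \<and> set s \<subseteq> {0..<k}}"

definition primitive_word :: "nat list \<Rightarrow> bool" where
  "primitive_word s \<longleftrightarrow> \<not> (\<exists>q r. r > 1 \<and> s = concat (replicate r q))"

definition necklace :: "nat list \<Rightarrow> nat list set" where
  "necklace s = {rotate j s | j. True}"

definition L :: "nat \<Rightarrow> nat \<Rightarrow> nat" where
  "L k m = card (necklace ` {s \<in> words k m. primitive_word s})"

definition o_sig :: "sign list \<Rightarrow> nat list \<Rightarrow> nat" where
  "o_sig \<sigma> s = length (filter (\<lambda>c. c < length \<sigma> \<and> \<sigma> ! c = Minus) s)"

text \<open>L_k(m; sigma) with real argument m; it is 0 unless m is a natural number.
  (Rotation preserves o_sig, so the parity condition is a property of the necklace.)\<close>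
definition L_sig :: "nat \<Rightarrow> real \<Rightarrow> sign list \<Rightarrow> nat" where
  "L_sig k m \<sigma> = (if m \<in> \<nat> then
      card (necklace ` {s \<in> words k (nat \<lfloor>m\<rfloor>). primitive_word s \<and> odd (o_sig \<sigma> s)})
    else 0)"

definition L_star :: "nat \<Rightarrow> nat \<Rightarrow> sign list \<Rightarrow> nat" where
  "L_star k n \<sigma> = L k n + L_sig k (real n / 2) \<sigma>"

end

theory Submission
  imports Defs "HOL-Library.Fun_Lexorder"
begin

text \<open>Count the quadruples \<open>(\<pi>, e1, e2, x)\<close> formed by a cyclic permutation \<open>\<pi>\<close> of the
  \<open>-+-\<close> class, one of its breakpoint pairs \<open>(e1, e2)\<close> (there are always exactly four) and a
  starting point \<open>x\<close>; there are \<open>n \<cdot> 4 c4(n)\<close> of them. The itinerary of such a quadruple is the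
  word whose \<open>k\<close>-th letter is the index of the monotone segment containing \<open>\<pi>\<^sup>k(x)\<close>. Two
  orbit points with equal labels keep their relative order after a step from the increasing
  segment and swap it after a step from a decreasing one, so the order of any two orbit points
  is read off from their itineraries, taken lexicographically with the alphabet reversed after
  every decreasing step. Hence a primitive word is the itinerary of exactly one quadruple, and
  sorting the rotations of any primitive word in this order builds that quadruple. A
  non-primitive itinerary is a square \<open>q q\<close> with \<open>q\<close> primitive and an odd number of decreasing
  letters, and each such square has exactly two preimages, differing only in the starting
  point: \<open>x\<close> or its antipode \<open>(\<pi> ^^ (n div 2)) x\<close>. So \<open>n \<cdot> 4 c4(n) = n L\<^sub>3(n) + 2 (n/2) L\<^sub>3(n/2; \<sigma>\<^sub>4)\<close>.\<close>

section \<open>Primitive words and necklaces\<close>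

lemma rotate_inj: "rotate j u = rotate j v \<Longrightarrow> u = v"
  unfolding rotate_def by (rule injD[OF inj_fn[OF inj_rotate1]])

lemma rotate_mult_fixed: "rotate k s = s \<Longrightarrow> rotate (a * k) s = s"
proof (induction a)
  case (Suc a)
  have "rotate (Suc a * k) s = rotate k (rotate (a * k) s)" by (simp add: rotate_rotate)
  then show ?case using Suc by simp
qed simp

lemma rotate_gcd_fixed:
  assumes "rotate k s = s"
  shows "rotate (gcd k (length s)) s = s"
proof (cases "k = 0")
  case False
  obtain x y where xy: "k * x = length s * y + gcd k (length s)"
    using bezout_nat[OF False] by blast
  have "rotate (gcd k (length s)) s = rotate (gcd k (length s) mod length s) s"
    by (rule rotate_conv_mod)
  also have "gcd k (length s) mod length s = (k * x) mod length s"
    using xy by simp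
  also have "rotate (k * x mod length s) s = rotate (x * k) s"
    by (simp only: mult.commute[of k x] rotate_conv_mod[symmetric])
  finally show ?thesis using rotate_mult_fixed[OF assms] by simp
qed simp

lemma nth_concat_replicate:
  "l < r * length q \<Longrightarrow> concat (replicate r q) ! l = q ! (l mod length q)"
proof (induction r arbitrary: l)
  case (Suc r)
  then show ?case
    by (cases "l < length q") (auto simp: nth_append mod_if)
qed simp

lemma rotate_fixed_concat_replicate:
  assumes rot: "rotate g s = s" and g: "0 < g" "g dvd length s"
  shows "s = concat (replicate (length s div g) (take g s))"
proof -
  have periodic: "s ! l = s ! (l mod g)" if "l < length s" for l
    using that
  proof (induction l rule: less_induct)
    case (less l)
    show ?case
    proof (cases "l < g")
      case False
      have "s ! (l - g) = rotate g s ! (l - g)" using rot by simp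
      also have "\<dots> = s ! l" using False less.prems by (simp add: nth_rotate)
      finally show ?thesis
        using less.IH[of "l - g"] less.prems False g(1) by (simp add: le_mod_geq)
    qed simp
  qed
  show ?thesis
  proof (cases "s = []")
    case False
    then have "g \<le> length s" using g by (simp add: dvd_imp_le)
    then have len: "length (concat (replicate (length s div g) (take g s))) = length s"
      using g(2) by (simp add: length_concat sum_list_replicate)
    show ?thesis
    proof (rule nth_equalityI)
      fix l assume "l < length s"
      moreover have "length (take g s) = g" using \<open>g \<le> length s\<close> by simp
      ultimately show "s ! l = concat (replicate (length s div g) (take g s)) ! l"
        using nth_concat_replicate[of l "length s div g" "take g s"] periodic[of l] g len
        by simp
    qed (use len in simp)
  qed simp
qed

lemma rotate_fixed_not_primitive_word:
  assumes "rotate k s = s" "0 < k" "k < length s"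
  shows "\<not> primitive_word s"
proof -
  define g where "g = gcd k (length s)"
  have "g \<le> k" using gcd_le1_nat[of k "length s"] assms(2) by (simp add: g_def)
  moreover have "0 < g" "g dvd length s" using assms(2) by (simp_all add: g_def)
  ultimately have g: "0 < g" "g < length s" "g dvd length s" using assms(3) by simp_all
  obtain r where r: "length s = g * r" using g(3) by blast
  then have "1 < length s div g"
    using g(1,2) by (cases "r \<le> 1") (auto simp: le_Suc_eq)
  moreover have "s = concat (replicate (length s div g) (take g s))"
    using rotate_fixed_concat_replicate rotate_gcd_fixed[OF assms(1)] g g_def by blast
  ultimately show ?thesis unfolding primitive_word_def by blast
qed

lemma primitive_word_iff_rotate:
  assumes "s \<noteq> []"
  shows "primitive_word s \<longleftrightarrow> (\<forall>k. 0 < k \<and> k < length s \<longrightarrow> rotate k s \<noteq> s)"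
proof
  assume "primitive_word s"
  then show "\<forall>k. 0 < k \<and> k < length s \<longrightarrow> rotate k s \<noteq> s"
    using rotate_fixed_not_primitive_word by blast
next
  assume no_fixed: "\<forall>k. 0 < k \<and> k < length s \<longrightarrow> rotate k s \<noteq> s"
  show "primitive_word s"
  proof (rule ccontr)
    assume "\<not> primitive_word s"
    then obtain q r where qr: "1 < r" "s = concat (replicate r q)"
      unfolding primitive_word_def by blast
    then obtain r' where r': "r = Suc r'" "0 < r'" by (cases r) auto
    have "q \<noteq> []" using qr assms by auto
    moreover have "length s = r * length q"
      using qr by (simp add: length_concat sum_list_replicate)
    moreover have "rotate (length q) s = s"
      using qr r' by (metis concat.simps(2) replicate_Suc replicate_append_same rotate_append
          concat_append concat.simps append_Nil2)
    ultimately show False using no_fixed qr(1) by simp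
  qed
qed

lemma primitive_word_rotate_inj:
  assumes "primitive_word q" "rotate a q = rotate b q" "a < length q" "b < length q"
  shows "a = b"
proof -
  have fixed: "rotate (d - c) q = q" if "c \<le> d" "rotate c q = rotate d q" for c d
  proof (rule rotate_inj)
    show "rotate c (rotate (d - c) q) = rotate c q"
      using that by (simp add: rotate_rotate)
  qed
  have "q \<noteq> []" using assms(3) by auto
  then have no_fixed: "rotate k q \<noteq> q" if "0 < k" "k < length q" for k
    using primitive_word_iff_rotate assms(1) that by blast
  show ?thesis
  proof (cases a b rule: linorder_cases)
    case less
    then show ?thesis using fixed[of a b] no_fixed[of "b - a"] assms(2,4) by simp
  next
    case greater
    then show ?thesis using fixed[of b a] no_fixed[of "a - b"] assms(2,3) by simp
  qed
qed

lemma primitive_word_append_self: "\<not> primitive_word (q @ q)"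
proof -
  have "q @ q = concat (replicate 2 q)" by (simp add: numeral_2_eq_2)
  moreover have "1 < (2::nat)" by simp
  ultimately show ?thesis unfolding primitive_word_def by blast
qed

lemma primitive_word_Nil: "\<not> primitive_word []"
  using primitive_word_append_self[of "[]"] by simp

lemma primitive_word_rotate_eq_iff:
  assumes "primitive_word q"
  shows "rotate i q = rotate j q \<longleftrightarrow> i mod length q = j mod length q"
proof -
  have "0 < length q" using assms primitive_word_Nil by (cases q) auto
  then show ?thesis
    using primitive_word_rotate_inj[OF assms, of "i mod length q" "j mod length q"]
    by (metis mod_less_divisor rotate_conv_mod)
qed

lemma rotate_eq_if_nth_shift_eq:
  assumes "\<And>k. k < length w \<Longrightarrow> w ! ((i + k) mod length w) = w ! ((j + k) mod length w)"
  shows "rotate i w = rotate j w"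
  by (rule nth_equalityI) (simp_all add: nth_rotate assms)

lemma primitive_word_rotate:
  assumes "primitive_word s"
  shows "primitive_word (rotate j s)"
proof (cases "s = []")
  case False
  then have "rotate j s \<noteq> []" by simp
  show ?thesis
    unfolding primitive_word_iff_rotate[OF \<open>rotate j s \<noteq> []\<close>]
  proof (intro allI impI notI)
    fix k assume k: "0 < k \<and> k < length (rotate j s)" "rotate k (rotate j s) = rotate j s"
    then have "rotate j (rotate k s) = rotate j s" by (simp add: rotate_rotate add.commute)
    then show False
      using rotate_inj assms primitive_word_iff_rotate[OF False] k(1) by fastforce
  qed
qed (use assms in simp)

lemma rotate_append_self:
  assumes "d \<le> length q"
  shows "rotate d (q @ q) = rotate d q @ rotate d q"
proof (cases "d = length q")
  case False
  then have "d < length q" using assms by simp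
  then have "rotate d (q @ q) = drop d q @ take d q @ drop d q @ take d q"
    by (simp add: rotate_drop_take)
  then show ?thesis using \<open>d < length q\<close> by (simp add: rotate_drop_take)
qed (simp add: rotate_append)

lemma rotate_fixed_square:
  assumes "rotate m w = w" "length w = 2 * m"
  shows "w = take m w @ take m w"
proof -
  have "drop m w @ take m w = take m w @ drop m w"
    using assms rotate_drop_take[of m w] by (cases "m = 0") simp_all
  moreover have "length (drop m w) = length (take m w)" using assms(2) by simp
  ultimately have "drop m w = take m w"
    using append_eq_append_conv[of "drop m w" "take m w"] by blast
  then show ?thesis by (metis append_take_drop_id)
qed

lemma nth_append_self: "a < 2 * length q \<Longrightarrow> (q @ q) ! a = q ! (a mod length q)"
  by (simp add: nth_append mod_if)

lemma length_filter_rotate: "length (filter P (rotate j s)) = length (filter P s)"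
proof -
  define i where "i = j mod length s"
  have "length (filter P s) = length (filter P (take i s)) + length (filter P (drop i s))"
    by (metis append_take_drop_id filter_append length_append)
  then show ?thesis by (simp add: rotate_drop_take i_def)
qed

lemma o_sig_rotate: "o_sig \<sigma> (rotate j s) = o_sig \<sigma> s"
  unfolding o_sig_def by (rule length_filter_rotate)

lemma necklace_conv_rotations:
  "s \<noteq> [] \<Longrightarrow> necklace s = (\<lambda>j. rotate j s) ` {..<length s}"
  unfolding necklace_def
  by (auto intro!: image_eqI[where x = "_ mod length s"] simp: rotate_conv_mod[symmetric])

lemma card_necklace:
  assumes "primitive_word s" "s \<noteq> []"
  shows "card (necklace s) = length s"
proof -
  have "inj_on (\<lambda>j. rotate j s) {..<length s}"
    using primitive_word_rotate_inj[OF assms(1)] by (auto simp: inj_on_def)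
  then show ?thesis using necklace_conv_rotations[OF assms(2)] by (simp add: card_image)
qed

lemma necklace_eq_if_mem:
  assumes "t \<in> necklace s"
  shows "necklace t = necklace s"
proof (cases "s = []")
  case False
  obtain j where t: "t = rotate j s" using assms unfolding necklace_def by auto
  have "s = rotate (length s - j mod length s) t"
    using False t by (simp add: rotate_rotate rotate_conv_mod[of j s])
  then have "necklace s \<subseteq> necklace t"
    unfolding necklace_def by (auto simp: rotate_rotate) (metis rotate_rotate)
  moreover have "necklace t \<subseteq> necklace s"
    unfolding necklace_def t by (auto simp: rotate_rotate)
  ultimately show ?thesis by blast
qed (use assms in \<open>simp add: necklace_def\<close>)

lemma card_eq_mult_card_necklaces:
  assumes fin: "finite S" and len: "\<And>s. s \<in> S \<Longrightarrow> length s = k" and "0 < k"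
    and rot: "\<And>s j. s \<in> S \<Longrightarrow> rotate j s \<in> S"
    and prim: "\<And>s. s \<in> S \<Longrightarrow> primitive_word s"
  shows "card S = k * card (necklace ` S)"
proof -
  have U: "\<Union> (necklace ` S) = S"
    unfolding necklace_def using rot by (force intro: exI[of _ 0])
  have "k * card (necklace ` S) = card (\<Union> (necklace ` S))"
  proof (rule card_partition)
    show "\<And>c. c \<in> necklace ` S \<Longrightarrow> card c = k"
      using card_necklace prim len \<open>0 < k\<close> by fastforce
    show "\<And>c1 c2. c1 \<in> necklace ` S \<Longrightarrow> c2 \<in> necklace ` S \<Longrightarrow> c1 \<noteq> c2 \<Longrightarrow> c1 \<inter> c2 = {}"
      using necklace_eq_if_mem by blast
  qed (use U fin in simp_all)
  then show ?thesis using U by simp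
qed

lemma finite_words: "finite (words k m)"
proof -
  have "words k m = {s. set s \<subseteq> {0..<k} \<and> length s = m}" unfolding words_def by auto
  then show ?thesis using finite_lists_length_eq[of "{0..<k}" m] by simp
qed

lemma card_primitive_words_rotation_invariant:
  assumes "0 < m" and P: "\<And>s j. P (rotate j s) = P s"
  shows "card {s \<in> words k m. primitive_word s \<and> P s} =
    m * card (necklace ` {s \<in> words k m. primitive_word s \<and> P s})"
proof (rule card_eq_mult_card_necklaces)
  show "finite {s \<in> words k m. primitive_word s \<and> P s}" using finite_words by simp
qed (use assms in \<open>auto simp: words_def primitive_word_rotate\<close>)

section \<open>Cyclic permutations of the \<open>-+-\<close> class\<close>

lemma cyclic_perm_permutes: "cyclic_perm n \<pi> \<Longrightarrow> \<pi> permutes {1..n}"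
  unfolding cyclic_perm_def by simp

lemma inj_on_funpow_below_period:
  assumes "inj f" "\<And>k. 0 < k \<Longrightarrow> k < \<rho> \<Longrightarrow> (f ^^ k) x \<noteq> x"
  shows "inj_on (\<lambda>k. (f ^^ k) x) {..<\<rho>}"
proof (rule linorder_inj_onI', rule notI)
  fix a b assume ab: "a \<in> {..<\<rho>}" "b \<in> {..<\<rho>}" "a < b" "(f ^^ a) x = (f ^^ b) x"
  have "(f ^^ a) ((f ^^ (b - a)) x) = (f ^^ (a + (b - a))) x"
    by (simp add: funpow_add)
  also have "\<dots> = (f ^^ a) x"
    using ab(3,4) by simp
  finally have "(f ^^ (b - a)) x = x"
    using injD[OF inj_fn[OF assms(1)]] by blast
  moreover have "0 < b - a" "b - a < \<rho>" using ab by auto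
  ultimately show False using assms(2) by blast
qed

lemma cyclic_perm_orbit:
  assumes cyc: "cyclic_perm n \<pi>" and x: "x \<in> {1..n}"
  shows "(\<pi> ^^ n) x = x" and "bij_betw (\<lambda>k. (\<pi> ^^ k) x) {..<n} {1..n}"
proof -
  have perm: "\<pi> permutes {1..n}" and reach: "\<And>y. y \<in> {1..n} \<Longrightarrow> \<exists>k. (\<pi> ^^ k) x = y"
    using cyc x unfolding cyclic_perm_def by auto
  define f where "f k = (\<pi> ^^ k) x" for k
  have "permutation \<pi>" using perm permutation_permutes by blast
  then obtain p where "0 < p" "f p = x"
    unfolding f_def by (rule permutation_self)
  define \<rho> where "\<rho> = (LEAST k. 0 < k \<and> f k = x)"
  have "0 < \<rho> \<and> f \<rho> = x"
    unfolding \<rho>_def by (rule LeastI[of _ p]) (use \<open>0 < p\<close> \<open>f p = x\<close> in simp)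
  then have \<rho>: "0 < \<rho>" "f \<rho> = x" by simp_all
  have inj: "inj_on f {..<\<rho>}"
    unfolding f_def using permutes_inj[OF perm] not_less_Least[of _ "\<lambda>k. 0 < k \<and> f k = x"]
    by (intro inj_on_funpow_below_period) (auto simp: \<rho>_def f_def)
  have "f ` {..<\<rho>} = {1..n}"
  proof
    show "f ` {..<\<rho>} \<subseteq> {1..n}"
      using permutes_in_funpow_image[OF perm x] by (auto simp: f_def)
    show "{1..n} \<subseteq> f ` {..<\<rho>}"
    proof
      fix y assume "y \<in> {1..n}"
      then obtain k where "f k = y" using reach f_def by blast
      then have "f (k mod \<rho>) = y"
        using funpow_mod_eq[where f = \<pi> and n = \<rho>] \<rho>(2) by (simp add: f_def)
      then show "y \<in> f ` {..<\<rho>}" using \<rho>(1) by auto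
    qed
  qed
  moreover from this have "\<rho> = n" using card_image[OF inj] by simp
  ultimately show "(\<pi> ^^ n) x = x" "bij_betw (\<lambda>k. (\<pi> ^^ k) x) {..<n} {1..n}"
    using \<rho>(2) inj unfolding bij_betw_def f_def by simp_all
qed

definition mpm_breakpoints :: "nat \<Rightarrow> (nat \<Rightarrow> nat) \<Rightarrow> nat \<Rightarrow> nat \<Rightarrow> bool" where
  "mpm_breakpoints n \<pi> e1 e2 \<longleftrightarrow> e1 \<le> e2 \<and> e2 \<le> n \<and>
     (\<forall>j j'. 0 < j \<and> j < j' \<and> j' \<le> e1 \<longrightarrow> \<pi> j' < \<pi> j) \<and>
     (\<forall>j j'. e1 < j \<and> j < j' \<and> j' \<le> e2 \<longrightarrow> \<pi> j < \<pi> j') \<and>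
     (\<forall>j j'. e2 < j \<and> j < j' \<and> j' \<le> n \<longrightarrow> \<pi> j' < \<pi> j)"

lemma in_sigma_class_mpm_iff:
  "in_sigma_class [Minus, Plus, Minus] n \<pi> \<longleftrightarrow>
     \<pi> permutes {1..n} \<and> (\<exists>e1 e2. mpm_breakpoints n \<pi> e1 e2)"
proof
  assume "in_sigma_class [Minus, Plus, Minus] n \<pi>"
  then obtain e where perm: "\<pi> permutes {1..n}" and e: "e 0 = 0" "e 3 = n"
    "\<forall>i<3. e i \<le> e (Suc i)"
    "\<forall>i<3. \<forall>j j'. e i < j \<and> j < j' \<and> j' \<le> e (Suc i) \<longrightarrow>
        (if [Minus, Plus, Minus] ! i = Plus then \<pi> j < \<pi> j' else \<pi> j' < \<pi> j)"
    unfolding in_sigma_class_def by (auto simp: numeral_3_eq_3)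
  have "mpm_breakpoints n \<pi> (e 1) (e 2)"
    unfolding mpm_breakpoints_def
  proof (intro conjI allI impI)
    show "e 1 \<le> e 2" using e(3) by (simp add: numeral_eq_Suc)
    show "e 2 \<le> n" using e(2) e(3)[rule_format, of 2] by (simp add: numeral_eq_Suc)
    fix j j'
    show "0 < j \<and> j < j' \<and> j' \<le> e 1 \<Longrightarrow> \<pi> j' < \<pi> j"
      using e(1) e(4)[rule_format, of 0 j j'] by simp
    show "e 1 < j \<and> j < j' \<and> j' \<le> e 2 \<Longrightarrow> \<pi> j < \<pi> j'"
      using e(4)[rule_format, of 1 j j'] by (simp add: numeral_eq_Suc)
    show "e 2 < j \<and> j < j' \<and> j' \<le> n \<Longrightarrow> \<pi> j' < \<pi> j"
      using e(2) e(4)[rule_format, of 2 j j'] by (simp add: numeral_eq_Suc)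
  qed
  then show "\<pi> permutes {1..n} \<and> (\<exists>e1 e2. mpm_breakpoints n \<pi> e1 e2)"
    using perm by blast
next
  assume "\<pi> permutes {1..n} \<and> (\<exists>e1 e2. mpm_breakpoints n \<pi> e1 e2)"
  then obtain e1 e2 where perm: "\<pi> permutes {1..n}" and bp: "mpm_breakpoints n \<pi> e1 e2"
    by blast
  define e :: "nat \<Rightarrow> nat" where "e i = [0, e1, e2, n] ! i" for i
  have "\<forall>i < length [Minus, Plus, Minus]. e i \<le> e (Suc i) \<and> (\<forall>j j'. e i < j \<and> j < j' \<and> j' \<le> e (Suc i) \<longrightarrow>
            (if [Minus, Plus, Minus] ! i = Plus then \<pi> j < \<pi> j' else \<pi> j > \<pi> j'))"
    using bp unfolding mpm_breakpoints_def e_def by (auto simp: less_Suc_eq numeral_eq_Suc)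
  moreover have "e 0 = 0" "e (length [Minus, Plus, Minus]) = n" by (simp_all add: e_def)
  ultimately show "in_sigma_class [Minus, Plus, Minus] n \<pi>"
    unfolding in_sigma_class_def using perm by blast
qed

lemma chain_transp:
  fixes f :: "nat \<Rightarrow> 'a" and a b j j' :: nat
  assumes "transp R" and step: "\<And>i. a \<le> i \<Longrightarrow> i + 1 \<le> b \<Longrightarrow> R (f i) (f (i + 1))"
    and "a \<le> j" "j < j'" "j' \<le> b"
  shows "R (f j) (f j')"
proof -
  have "Suc j \<le> j'" using \<open>j < j'\<close> by simp
  then show ?thesis using \<open>j' \<le> b\<close>
  proof (induction j' rule: dec_induct)
    case base
    then show ?case using step \<open>a \<le> j\<close> by simp
  next
    case (step k)
    then show ?case
      using assms(2)[of k] \<open>a \<le> j\<close> \<open>transp R\<close> by (auto elim: transpE)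
  qed
qed

lemma mpm_breakpoints_iff_adjacent:
  "mpm_breakpoints n \<pi> e1 e2 \<longleftrightarrow> e1 \<le> e2 \<and> e2 \<le> n \<and>
     (\<forall>i. 0 < i \<and> i + 1 \<le> e1 \<longrightarrow> \<pi> (i + 1) < \<pi> i) \<and>
     (\<forall>i. e1 < i \<and> i + 1 \<le> e2 \<longrightarrow> \<pi> i < \<pi> (i + 1)) \<and>
     (\<forall>i. e2 < i \<and> i + 1 \<le> n \<longrightarrow> \<pi> (i + 1) < \<pi> i)"
  (is "_ \<longleftrightarrow> ?adjacent")
proof
  assume adj: ?adjacent
  show "mpm_breakpoints n \<pi> e1 e2"
    unfolding mpm_breakpoints_def
  proof (intro conjI allI impI)
    fix j j'
    show "0 < j \<and> j < j' \<and> j' \<le> e1 \<Longrightarrow> \<pi> j' < \<pi> j"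
      using chain_transp[of "(>)" 1 e1 \<pi> j j'] adj by (auto simp: transp_def)
    show "e1 < j \<and> j < j' \<and> j' \<le> e2 \<Longrightarrow> \<pi> j < \<pi> j'"
      using chain_transp[of "(<)" "e1 + 1" e2 \<pi> j j'] adj by (auto simp: transp_def)
    show "e2 < j \<and> j < j' \<and> j' \<le> n \<Longrightarrow> \<pi> j' < \<pi> j"
      using chain_transp[of "(>)" "e2 + 1" n \<pi> j j'] adj by (auto simp: transp_def)
  qed (use adj in simp_all)
qed (auto simp: mpm_breakpoints_def)

definition ascents :: "nat \<Rightarrow> (nat \<Rightarrow> nat) \<Rightarrow> nat set" where
  "ascents n \<pi> = {i. 0 < i \<and> i + 1 \<le> n \<and> \<pi> i < \<pi> (i + 1)}"

lemma finite_ascents: "finite (ascents n \<pi>)"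
  unfolding ascents_def by (rule finite_subset[of _ "{..n}"]) auto

lemma descent_if_not_ascent:
  assumes "\<pi> permutes {1..n}" "0 < i" "i + 1 \<le> n" "i \<notin> ascents n \<pi>"
  shows "\<pi> (i + 1) < \<pi> i"
proof -
  have "\<pi> i \<noteq> \<pi> (i + 1)"
  proof
    assume "\<pi> i = \<pi> (i + 1)"
    then have "i = i + 1" by (rule injD[OF permutes_inj[OF assms(1)]])
    then show False by simp
  qed
  then show ?thesis using assms(2-4) unfolding ascents_def by auto
qed

lemma cyclic_perm_ascents_nonempty:
  assumes cyc: "cyclic_perm n \<pi>" and "3 \<le> n"
  shows "ascents n \<pi> \<noteq> {}"
proof
  assume no_ascent: "ascents n \<pi> = {}"
  have perm: "\<pi> permutes {1..n}" using cyc by (rule cyclic_perm_permutes)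
  have decr: "\<pi> j' < \<pi> j" if "1 \<le> j" "j < j'" "j' \<le> n" for j j'
    using chain_transp[of "(>)" 1 n \<pi> j j'] descent_if_not_ascent[OF perm] no_ascent that
    by (auto simp: transp_def)
  have range: "\<pi> j \<in> {1..n}" if "j \<in> {1..n}" for j
    using permutes_in_image[OF perm] that by blast
  have "1 \<in> \<pi> ` {1..n}" "n \<in> \<pi> ` {1..n}"
    using permutes_image[OF perm] \<open>3 \<le> n\<close> by auto
  then obtain j1 jn where j: "j1 \<in> {1..n}" "\<pi> j1 = 1" "jn \<in> {1..n}" "\<pi> jn = n"
    by (metis imageE)
  have "\<pi> 1 = n"
    using decr[of 1 jn] range[of 1] j \<open>3 \<le> n\<close> by (cases "jn = 1") auto
  moreover have "\<pi> n = 1"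
    using decr[of j1 n] range[of n] j \<open>3 \<le> n\<close> by (cases "j1 = n") auto
  ultimately have "(\<pi> ^^ k) 1 \<in> {1, n}" for k
    by (induction k) auto
  moreover have "1 \<in> {1..n}" "2 \<in> {1..n}" using \<open>3 \<le> n\<close> by auto
  then obtain k where "(\<pi> ^^ k) 1 = 2"
    using cyc unfolding cyclic_perm_def by blast
  ultimately have "(2::nat) \<in> {1, n}" by metis
  then show False using \<open>3 \<le> n\<close> by auto
qed

lemma ascents_within_breakpoints:
  assumes "mpm_breakpoints n \<pi> e1 e2" "i \<in> ascents n \<pi>"
  shows "e1 \<le> i" "i \<le> e2"
proof -
  have i: "0 < i" "i + 1 \<le> n" "\<not> \<pi> (i + 1) < \<pi> i"
    using assms(2) unfolding ascents_def by auto
  have adj: "\<forall>i. 0 < i \<and> i + 1 \<le> e1 \<longrightarrow> \<pi> (i + 1) < \<pi> i"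
    "\<forall>i. e2 < i \<and> i + 1 \<le> n \<longrightarrow> \<pi> (i + 1) < \<pi> i"
    using assms(1) unfolding mpm_breakpoints_iff_adjacent by simp_all
  show "e1 \<le> i" using adj(1) i by (cases "e1 \<le> i") auto
  show "i \<le> e2" using adj(2) i by (cases "i \<le> e2") auto
qed

lemma ascents_interval:
  assumes bp: "mpm_breakpoints n \<pi> e1 e2" and ne: "ascents n \<pi> \<noteq> {}"
    and i: "Min (ascents n \<pi>) \<le> i" "i \<le> Max (ascents n \<pi>)"
  shows "i \<in> ascents n \<pi>"
proof -
  define i0 i1 where "i0 = Min (ascents n \<pi>)" and "i1 = Max (ascents n \<pi>)"
  have asc: "i0 \<in> ascents n \<pi>" "i1 \<in> ascents n \<pi>"
    using ne finite_ascents by (simp_all add: i0_def i1_def)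
  have "e1 \<le> i0" "i1 \<le> e2"
    using ascents_within_breakpoints[OF bp] asc by simp_all
  consider "i = i0" | "i = i1" | "e1 < i" "i + 1 \<le> e2"
    using i \<open>e1 \<le> i0\<close> \<open>i1 \<le> e2\<close> unfolding i0_def i1_def by linarith
  then show ?thesis
  proof cases
    case 3
    then have "\<pi> i < \<pi> (i + 1)" using bp unfolding mpm_breakpoints_iff_adjacent by simp
    moreover have "0 < i" "i + 1 \<le> n"
      using 3 asc(1) i bp unfolding ascents_def i0_def mpm_breakpoints_def by auto
    ultimately show ?thesis unfolding ascents_def by simp
  qed (use asc in simp_all)
qed

lemma mpm_breakpoints_at_ascent_ends:
  assumes perm: "\<pi> permutes {1..n}" and bp: "mpm_breakpoints n \<pi> a1 a2"
    and ne: "ascents n \<pi> \<noteq> {}"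
    and e: "e1 \<in> {Min (ascents n \<pi>) - 1, Min (ascents n \<pi>)}"
      "e2 \<in> {Max (ascents n \<pi>), Max (ascents n \<pi>) + 1}"
  shows "mpm_breakpoints n \<pi> e1 e2"
proof -
  define i0 i1 where "i0 = Min (ascents n \<pi>)" and "i1 = Max (ascents n \<pi>)"
  have asc: "i0 \<in> ascents n \<pi>" "i1 \<in> ascents n \<pi>"
    using ne finite_ascents by (simp_all add: i0_def i1_def)
  then have "i0 \<le> i1" "i1 + 1 \<le> n"
    using finite_ascents unfolding i0_def i1_def ascents_def by auto
  moreover have "e1 \<le> i0" "i0 \<le> e1 + 1" "i1 \<le> e2" "e2 \<le> i1 + 1"
    using e unfolding i0_def i1_def by auto
  ultimately have bounds: "e1 \<le> i0" "i0 \<le> e1 + 1" "i0 \<le> i1" "i1 \<le> e2" "e2 \<le> i1 + 1"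
    "e2 \<le> n"
    by simp_all
  have not_asc: "i \<notin> ascents n \<pi>" if "i < i0 \<or> i1 < i" for i
    using that Min_le[OF finite_ascents, of i n \<pi>] Max_ge[OF finite_ascents, of i n \<pi>]
    unfolding i0_def i1_def by linarith
  show ?thesis unfolding mpm_breakpoints_iff_adjacent
  proof (intro conjI allI impI)
    show "e1 \<le> e2" "e2 \<le> n" using bounds by simp_all
    fix i
    show "\<pi> (i + 1) < \<pi> i" if "0 < i \<and> i + 1 \<le> e1"
      using descent_if_not_ascent[OF perm] not_asc[of i] that bounds by simp
    show "\<pi> i < \<pi> (i + 1)" if "e1 < i \<and> i + 1 \<le> e2"
      using ascents_interval[OF bp ne, of i] that bounds unfolding ascents_def i0_def i1_def
      by simp
    show "\<pi> (i + 1) < \<pi> i" if "e2 < i \<and> i + 1 \<le> n"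
      using descent_if_not_ascent[OF perm] not_asc[of i] that bounds asc(1)
      unfolding ascents_def by simp
  qed
qed

lemma ascent_ends_if_mpm_breakpoints:
  assumes bp: "mpm_breakpoints n \<pi> e1 e2" and ne: "ascents n \<pi> \<noteq> {}"
  shows "e1 \<in> {Min (ascents n \<pi>) - 1, Min (ascents n \<pi>)}"
    "e2 \<in> {Max (ascents n \<pi>), Max (ascents n \<pi>) + 1}"
proof -
  define i0 i1 where "i0 = Min (ascents n \<pi>)" and "i1 = Max (ascents n \<pi>)"
  have asc: "i0 \<in> ascents n \<pi>" "i1 \<in> ascents n \<pi>"
    using ne finite_ascents by (simp_all add: i0_def i1_def)
  have "e1 \<le> i0" "i1 \<le> e2" "i0 \<le> i1"
    using ascents_within_breakpoints[OF bp] asc Max_ge[OF finite_ascents asc(1)]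
    unfolding i1_def by simp_all
  have adj: "\<forall>i. e1 < i \<and> i + 1 \<le> e2 \<longrightarrow> \<pi> i < \<pi> (i + 1)" "e2 \<le> n"
    using bp unfolding mpm_breakpoints_iff_adjacent by simp_all
  have "i0 \<le> e1 + 1"
  proof (rule ccontr)
    assume "\<not> i0 \<le> e1 + 1"
    then have "e1 + 1 \<in> ascents n \<pi>"
      using adj \<open>i0 \<le> i1\<close> \<open>i1 \<le> e2\<close> unfolding ascents_def by simp
    then show False
      using Min_le[OF finite_ascents] \<open>\<not> i0 \<le> e1 + 1\<close> unfolding i0_def by fastforce
  qed
  moreover have "e2 \<le> i1 + 1"
  proof (rule ccontr)
    assume "\<not> e2 \<le> i1 + 1"
    then have "\<pi> (e2 - 1) < \<pi> (e2 - 1 + 1)"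
      using adj(1)[rule_format, of "e2 - 1"] \<open>e1 \<le> i0\<close> \<open>i0 \<le> i1\<close> by simp
    then have "e2 - 1 \<in> ascents n \<pi>"
      using adj(2) \<open>\<not> e2 \<le> i1 + 1\<close> unfolding ascents_def by simp
    then show False
      using Max_ge[OF finite_ascents] \<open>\<not> e2 \<le> i1 + 1\<close> unfolding i1_def by fastforce
  qed
  ultimately show "e1 \<in> {i0 - 1, i0}" "e2 \<in> {i1, i1 + 1}"
    using \<open>e1 \<le> i0\<close> \<open>i1 \<le> e2\<close> by auto
qed

lemma card_mpm_breakpoints:
  assumes cyc: "cyclic_perm n \<pi>" and "3 \<le> n" and bp: "mpm_breakpoints n \<pi> a1 a2"
  shows "card {(e1, e2). mpm_breakpoints n \<pi> e1 e2} = 4"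
proof -
  define i0 i1 where "i0 = Min (ascents n \<pi>)" and "i1 = Max (ascents n \<pi>)"
  have ne: "ascents n \<pi> \<noteq> {}" using cyclic_perm_ascents_nonempty[OF cyc \<open>3 \<le> n\<close>] .
  have "0 < i0" using ne finite_ascents unfolding i0_def ascents_def by auto
  have "{(e1, e2). mpm_breakpoints n \<pi> e1 e2} = {i0 - 1, i0} \<times> {i1, i1 + 1}"
    using ascent_ends_if_mpm_breakpoints[OF _ ne]
      mpm_breakpoints_at_ascent_ends[OF cyclic_perm_permutes[OF cyc] bp ne]
    unfolding i0_def i1_def by blast
  then show ?thesis using \<open>0 < i0\<close> by (simp add: card_cartesian_product)
qed

section \<open>Itineraries\<close>

definition segment_label :: "nat \<Rightarrow> nat \<Rightarrow> nat \<Rightarrow> nat" where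
  "segment_label e1 e2 y = (if y \<le> e1 then 0 else if y \<le> e2 then 1 else 2)"

lemma segment_label_mono: "y \<le> y' \<Longrightarrow> segment_label e1 e2 y \<le> segment_label e1 e2 y'"
  by (simp add: segment_label_def)

text \<open>Steps taken from a decreasing segment (labels 0 and 2) reverse the relative order of two
  orbit points with equal labels; see \<open>marked_cycle.order_step\<close>.\<close>

definition reversals :: "(nat \<Rightarrow> nat) \<Rightarrow> nat \<Rightarrow> nat \<Rightarrow> nat" where
  "reversals W i N = length (filter (\<lambda>c. c \<noteq> 1) (map (\<lambda>l. W (i + l)) [0..<N]))"

lemma reversals_0 [simp]: "reversals W i 0 = 0"
  by (simp add: reversals_def)

lemma reversals_Suc: "reversals W i (Suc N) = reversals W i N + (if W (i + N) \<noteq> 1 then 1 else 0)"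
  by (simp add: reversals_def)

lemma reversals_add: "reversals W i (a + b) = reversals W i a + reversals W (i + a) b"
  by (induction b) (simp_all add: reversals_Suc add.assoc)

lemma reversals_Suc_left:
  "reversals W i (Suc N) = (if W i \<noteq> 1 then 1 else 0) + reversals W (Suc i) N"
  using reversals_add[of W i 1 N] by (simp add: reversals_Suc)

lemma reversals_cong:
  "(\<And>l. l < N \<Longrightarrow> W (i + l) = W' (j + l)) \<Longrightarrow> reversals W i N = reversals W' j N"
  unfolding reversals_def by (metis (mono_tags, lifting) atLeastLessThan_iff map_eq_conv set_upt)

lemma reversals_conv_list:
  assumes "\<And>l. l < length s \<Longrightarrow> W l = s ! l"
  shows "reversals W 0 (length s) = length (filter (\<lambda>c. c \<noteq> 1) s)"
proof -
  have "map (\<lambda>l. W (0 + l)) [0..<length s] = s"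
    by (rule nth_equalityI) (simp_all add: assms)
  then show ?thesis unfolding reversals_def by simp
qed

definition itinerary :: "nat \<Rightarrow> (nat \<Rightarrow> nat) \<Rightarrow> nat \<Rightarrow> nat \<Rightarrow> nat \<Rightarrow> nat list" where
  "itinerary n \<pi> e1 e2 x = map (\<lambda>k. segment_label e1 e2 ((\<pi> ^^ k) x)) [0..<n]"

lemma bij_betw_card_filter:
  assumes "bij_betw f A B"
  shows "card {a \<in> A. P (f a)} = card {b \<in> B. P b}"
proof -
  have "f ` {a \<in> A. P (f a)} = {b \<in> B. P b}" using assms unfolding bij_betw_def by auto
  moreover have "inj_on f {a \<in> A. P (f a)}"
    using assms unfolding bij_betw_def by (auto intro: inj_on_subset)
  ultimately show ?thesis by (metis card_image)
qed

locale marked_cycle =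
  fixes n :: nat and \<pi> :: "nat \<Rightarrow> nat" and e1 e2 x :: nat
  assumes cyclic: "cyclic_perm n \<pi>" and breakpoints: "mpm_breakpoints n \<pi> e1 e2"
    and start: "x \<in> {1..n}"
begin

abbreviation p :: "nat \<Rightarrow> nat" where "p k \<equiv> (\<pi> ^^ k) x"
abbreviation W :: "nat \<Rightarrow> nat" where "W k \<equiv> segment_label e1 e2 (p k)"

lemma perm: "\<pi> permutes {1..n}"
  using cyclic by (rule cyclic_perm_permutes)

lemma n_pos: "0 < n"
  using start by simp

lemma p_in: "p k \<in> {1..n}"
  using permutes_in_funpow_image[OF perm start] .

lemma p_bij: "bij_betw p {..<n} {1..n}"
  using cyclic_perm_orbit(2)[OF cyclic start] .

lemma p_mod: "p (k mod n) = p k"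
  using funpow_mod_eq[where f = \<pi>] cyclic_perm_orbit(1)[OF cyclic start] by simp

lemma p_eq_iff: "p i = p j \<longleftrightarrow> i mod n = j mod n"
proof
  assume "p i = p j"
  then have "p (i mod n) = p (j mod n)" by (simp add: p_mod)
  then show "i mod n = j mod n"
    using p_bij n_pos unfolding bij_betw_def inj_on_def by simp
qed (metis p_mod)

lemma p_add: "p (i + k) = (\<pi> ^^ k) (p i)"
  by (metis add.commute funpow_add comp_apply)

lemma length_itinerary: "length (itinerary n \<pi> e1 e2 x) = n"
  by (simp add: itinerary_def)

lemma set_itinerary: "set (itinerary n \<pi> e1 e2 x) \<subseteq> {0..<3}"
  unfolding itinerary_def by (auto simp: segment_label_def)

lemma W_conv_itinerary: "W k = itinerary n \<pi> e1 e2 x ! (k mod n)"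
  unfolding itinerary_def using n_pos p_mod[of k] by simp

lemma order_step:
  assumes "p i < p j" "W i = W j"
  shows "if W i = 1 then p (Suc i) < p (Suc j) else p (Suc j) < p (Suc i)"
proof -
  have range: "1 \<le> p i" "p j \<le> n" using p_in[of i] p_in[of j] by auto
  note bp = breakpoints[unfolded mpm_breakpoints_def]
  consider "p j \<le> e1" | "e1 < p i" "p j \<le> e2" | "e2 < p i"
    using assms by (auto simp: segment_label_def split: if_splits)
  then show ?thesis
  proof cases
    case 1
    then have "\<pi> (p j) < \<pi> (p i)" using bp range assms(1) by auto
    then show ?thesis using 1 assms(1) by (simp add: segment_label_def)
  next
    case 2
    then have "\<pi> (p i) < \<pi> (p j)" using bp range assms(1) by auto
    then show ?thesis using 2 assms(1) by (simp add: segment_label_def)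
  next
    case 3
    then have "\<pi> (p j) < \<pi> (p i)" using bp range assms(1) by auto
    then show ?thesis using 3 assms(1) bp by (simp add: segment_label_def)
  qed
qed

lemma order_after_equal_labels:
  assumes "\<forall>l<N. W (i + l) = W (j + l)" "p i < p j"
  shows "if even (reversals W i N) then p (i + N) < p (j + N) else p (j + N) < p (i + N)"
  using assms(1)
proof (induction N)
  case (Suc N)
  then have IH: "if even (reversals W i N) then p (i + N) < p (j + N) else p (j + N) < p (i + N)"
    and same: "W (i + N) = W (j + N)" by simp_all
  show ?case
  proof (cases "even (reversals W i N)")
    case True
    then show ?thesis
      using IH order_step[of "i + N" "j + N"] same by (auto simp: reversals_Suc split: if_splits)
  next
    case False
    then show ?thesis
      using IH order_step[of "j + N" "i + N"] same by (auto simp: reversals_Suc split: if_splits)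
  qed
qed (use assms(2) in simp)

lemma order_at_first_difference:
  assumes "\<forall>l<k. W (i + l) = W (j + l)" "W (i + k) \<noteq> W (j + k)" "p i < p j"
  shows "W (i + k) < W (j + k) \<longleftrightarrow> even (reversals W i k)"
proof (cases "even (reversals W i k)")
  case True
  then have "W (i + k) \<le> W (j + k)"
    using order_after_equal_labels[OF assms(1,3)] segment_label_mono by simp
  then show ?thesis using True assms(2) by simp
next
  case False
  then have "W (j + k) \<le> W (i + k)"
    using order_after_equal_labels[OF assms(1,3)] segment_label_mono by simp
  then show ?thesis using False by simp
qed

lemma orbit_closes_at_even_period:
  assumes "0 < D" and per: "\<forall>k. W (k + D) = W k" and even: "even (reversals W 0 D)"
  shows "p D = p 0"
proof (rule ccontr)
  have periodic: "W (a * D + l) = W l" for a l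
  proof (induction a)
    case (Suc a)
    then show ?case using per[rule_format, of "a * D + l"] by (simp add: algebra_simps)
  qed simp
  then have same: "\<forall>l<D. W (a * D + l) = W (b * D + l)" for a b by simp
  have even_block: "even (reversals W (a * D) D)" for a
    using even reversals_cong[of D W "a * D" W 0] periodic by simp
  have up: "p (Suc a * D) < p (Suc (Suc a) * D)" if "p (a * D) < p (Suc a * D)" for a
    using order_after_equal_labels[OF same that] even_block[of a] by (simp add: add.commute)
  have down: "p (Suc (Suc a) * D) < p (Suc a * D)" if "p (Suc a * D) < p (a * D)" for a
    using order_after_equal_labels[OF same that] even_block[of "Suc a"] by (simp add: add.commute)
  have full_turn: "p (n * D) = p 0"
    unfolding p_eq_iff by simp
  assume "p D \<noteq> p 0"
  then consider "p 0 < p D" | "p D < p 0" by linarith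
  then show False
  proof cases
    case 1
    then have "p (a * D) < p (Suc a * D)" for a by (induction a) (use up in auto)
    then have "p (0 * D) < p (n * D)"
      using chain_transp[of "(<)" 0 n "\<lambda>a. p (a * D)" 0 n] n_pos by (simp add: transp_def)
    then show False using full_turn by simp
  next
    case 2
    then have "p (Suc a * D) < p (a * D)" for a by (induction a) (use down in auto)
    then have "p (n * D) < p (0 * D)"
      using chain_transp[of "(>)" 0 n "\<lambda>a. p (a * D)" 0 n] n_pos by (simp add: transp_def)
    then show False using full_turn by simp
  qed
qed

lemma label_period_is_half:
  assumes "0 < d" "d < n" and per: "\<forall>k. W (k + d) = W k"
  shows "n = 2 * d \<and> odd (reversals W 0 d)"
proof (cases "even (reversals W 0 d)")
  case True
  then have "p d = p 0" using orbit_closes_at_even_period[OF assms(1) per] by simp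
  then show ?thesis using assms(1,2) unfolding p_eq_iff by simp
next
  case False
  have per2: "\<forall>k. W (k + 2 * d) = W k"
    using per by (metis add.assoc mult_2)
  have "reversals W 0 (2 * d) = reversals W 0 d + reversals W d d"
    using reversals_add[of W 0 d d] by (simp add: mult_2)
  moreover have "reversals W d d = reversals W 0 d"
    by (rule reversals_cong) (use per in \<open>simp add: add.commute\<close>)
  ultimately have "even (reversals W 0 (2 * d))" by simp
  then have "p (2 * d) = p 0" using orbit_closes_at_even_period[OF _ per2] assms(1) by simp
  then have "n dvd 2 * d" unfolding p_eq_iff by (simp add: mod_eq_0_iff_dvd)
  then obtain c where c: "2 * d = n * c" by blast
  have "n * c < n * 2" using c assms(2) by linarith
  moreover have "0 < c" using c assms(1) by (cases c) auto
  ultimately have "c = 1" by simp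
  then show ?thesis using c False by simp
qed

lemma label_period_if_rotate_fixed:
  assumes "rotate k (itinerary n \<pi> e1 e2 x) = itinerary n \<pi> e1 e2 x"
  shows "\<forall>l. W (l + k) = W l"
proof
  fix l
  have "itinerary n \<pi> e1 e2 x ! ((k + l mod n) mod n) = itinerary n \<pi> e1 e2 x ! (l mod n)"
    using nth_rotate[of "l mod n" "itinerary n \<pi> e1 e2 x" k] n_pos assms
    by (simp add: length_itinerary)
  then show "W (l + k) = W l"
    using W_conv_itinerary by (simp add: add.commute mod_add_right_eq)
qed

lemma itinerary_primitive_or_square:
  defines "w \<equiv> itinerary n \<pi> e1 e2 x"
  shows "primitive_word w \<or> (\<exists>m. n = 2 * m \<and> w = take m w @ take m w \<and>
    primitive_word (take m w) \<and> odd (reversals W 0 m))"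
proof (cases "primitive_word w")
  case False
  have lw: "length w = n" using length_itinerary w_def by simp
  have "w \<noteq> []" using lw n_pos by auto
  obtain m where m: "0 < m" "m < n" "rotate m w = w"
    using False primitive_word_iff_rotate[OF \<open>w \<noteq> []\<close>] lw by auto
  have half: "n = 2 * m" "odd (reversals W 0 m)"
    using label_period_is_half[OF m(1,2) label_period_if_rotate_fixed] m(3) w_def by simp_all
  then have square: "w = take m w @ take m w"
    using rotate_fixed_square[OF m(3)] lw by simp
  have "primitive_word (take m w)"
  proof -
    have "take m w \<noteq> []" "length (take m w) = m" using m lw half by auto
    moreover have "rotate d (take m w) \<noteq> take m w" if "0 < d" "d < m" for d
    proof
      assume "rotate d (take m w) = take m w"
      then have "rotate d w = w"
        using rotate_append_self[of d "take m w"] that square \<open>length (take m w) = m\<close>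
        by (metis less_imp_le)
      then have "n = 2 * d"
        using label_period_is_half[of d] label_period_if_rotate_fixed that half(1) w_def by simp
      then show False using that half(1) by simp
    qed
    ultimately show ?thesis using primitive_word_iff_rotate by metis
  qed
  then show ?thesis using half square by blast
qed simp

lemma card_label_0: "e1 = card {k \<in> {..<n}. W k = 0}"
proof -
  have "{k \<in> {..<n}. W k = 0} = {k \<in> {..<n}. p k \<le> e1}"
    by (auto simp: segment_label_def)
  then have "card {k \<in> {..<n}. W k = 0} = card {y \<in> {1..n}. y \<le> e1}"
    using bij_betw_card_filter[OF p_bij, of "\<lambda>y. y \<le> e1"] by simp
  also have "{y \<in> {1..n}. y \<le> e1} = {1..e1}"
    using breakpoints unfolding mpm_breakpoints_def by auto
  finally show ?thesis by simp
qed

lemma card_label_le_1: "e2 = card {k \<in> {..<n}. W k \<le> 1}"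
proof -
  have "{k \<in> {..<n}. W k \<le> 1} = {k \<in> {..<n}. p k \<le> e2}"
    using breakpoints unfolding mpm_breakpoints_def by (auto simp: segment_label_def)
  then have "card {k \<in> {..<n}. W k \<le> 1} = card {y \<in> {1..n}. y \<le> e2}"
    using bij_betw_card_filter[OF p_bij, of "\<lambda>y. y \<le> e2"] by simp
  also have "{y \<in> {1..n}. y \<le> e2} = {1..e2}"
    using breakpoints unfolding mpm_breakpoints_def by auto
  finally show ?thesis by simp
qed

lemma p_eq_rank: "p k = card {j \<in> {..<n}. p j < p k} + 1"
proof -
  have "card {j \<in> {..<n}. p j < p k} = card {y \<in> {1..n}. y < p k}"
    using bij_betw_card_filter[OF p_bij, of "\<lambda>y. y < p k"] by simp
  also have "{y \<in> {1..n}. y < p k} = {1..<p k}" using p_in[of k] by auto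
  finally show ?thesis using p_in[of k] by simp
qed

lemma W_square:
  assumes "n = 2 * m" "itinerary n \<pi> e1 e2 x = q @ q" "length q = m"
  shows "W l = q ! (l mod m)"
proof -
  have "W l = (q @ q) ! (l mod n)" using W_conv_itinerary[of l] assms(2) by simp
  also have "\<dots> = q ! (l mod m)"
    using nth_append_self[of "l mod n" q] assms(1,3) n_pos by (simp add: mod_mod_cancel)
  finally show ?thesis .
qed

lemma antipode_marked_cycle:
  assumes "n = 2 * m" "itinerary n \<pi> e1 e2 x = q @ q" "length q = m"
  shows "marked_cycle n \<pi> e1 e2 (p m)" "itinerary n \<pi> e1 e2 (p m) = q @ q"
proof -
  show "marked_cycle n \<pi> e1 e2 (p m)"
    unfolding marked_cycle_def using cyclic breakpoints p_in by simp
  show "itinerary n \<pi> e1 e2 (p m) = q @ q"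
  proof (rule nth_equalityI)
    fix k assume "k < length (itinerary n \<pi> e1 e2 (p m))"
    then have "k < n" by (simp add: itinerary_def)
    have "itinerary n \<pi> e1 e2 (p m) ! k = W (k + m)"
      using \<open>k < n\<close> by (simp add: itinerary_def funpow_add)
    also have "\<dots> = (q @ q) ! k"
      using W_square[OF assms, of "k + m"] nth_append_self[of k q] \<open>k < n\<close> assms(1,3) by simp
    finally show "itinerary n \<pi> e1 e2 (p m) ! k = (q @ q) ! k" .
  qed (simp add: itinerary_def assms)
qed

lemma order_of_antipodes:
  assumes "n = 2 * m" and per: "\<forall>l. W (l + m) = W l"
  shows "p i < p (i + m) \<longleftrightarrow> (p 0 < p m \<longleftrightarrow> even (reversals W 0 i))"
proof -
  have "p 0 \<noteq> p m" using assms(1) n_pos unfolding p_eq_iff by simp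
  have same: "\<forall>l<i. W (0 + l) = W (m + l)" "\<forall>l<i. W (m + l) = W (0 + l)"
    using per by (simp_all add: add.commute)
  have "reversals W m i = reversals W 0 i"
    by (rule reversals_cong) (use per in \<open>simp add: add.commute\<close>)
  show ?thesis
  proof (cases "p 0 < p m")
    case True
    then show ?thesis
      using order_after_equal_labels[OF same(1)] by (auto simp: add.commute split: if_splits)
  next
    case False
    then have "p m < p 0" using \<open>p 0 \<noteq> p m\<close> by simp
    then show ?thesis
      using order_after_equal_labels[OF same(2)] False \<open>reversals W m i = reversals W 0 i\<close>
      by (auto simp: add.commute split: if_splits)
  qed
qed

lemma rotate_itinerary_eq_if_same_labels:
  assumes "\<forall>k. W (i + k) = W (j + k)"
  shows "rotate i (itinerary n \<pi> e1 e2 x) = rotate j (itinerary n \<pi> e1 e2 x)"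
  using assms W_conv_itinerary by (intro rotate_eq_if_nth_shift_eq) (simp add: length_itinerary)

lemma rotate_half_eq_if_same_labels:
  assumes "n = 2 * m" "itinerary n \<pi> e1 e2 x = q @ q" "length q = m"
    and "\<forall>k. W (i + k) = W (j + k)"
  shows "rotate i q = rotate j q"
  using assms W_square[OF assms(1-3)] by (intro rotate_eq_if_nth_shift_eq) simp

end

lemma same_itinerary_labels:
  assumes "marked_cycle n \<pi> e1 e2 x" "marked_cycle n \<pi>' e1' e2' x'"
    and "itinerary n \<pi> e1 e2 x = itinerary n \<pi>' e1' e2' x'"
  shows "segment_label e1 e2 ((\<pi> ^^ k) x) = segment_label e1' e2' ((\<pi>' ^^ k) x')"
  using marked_cycle.W_conv_itinerary[OF assms(1)] marked_cycle.W_conv_itinerary[OF assms(2)]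
    assms(3) by simp

lemma marked_cycle_eqI:
  assumes mc: "marked_cycle n \<pi> e1 e2 x" and mc': "marked_cycle n \<pi>' e1' e2' x'"
    and w: "itinerary n \<pi> e1 e2 x = itinerary n \<pi>' e1' e2' x'"
    and order: "\<And>i j. (\<pi> ^^ i) x < (\<pi> ^^ j) x \<longleftrightarrow> (\<pi>' ^^ i) x' < (\<pi>' ^^ j) x'"
  shows "(\<pi>, e1, e2, x) = (\<pi>', e1', e2', x')"
proof -
  note labels = same_itinerary_labels[OF mc mc' w]
  have "e1 = e1'" "e2 = e2'"
    using marked_cycle.card_label_0[OF mc] marked_cycle.card_label_0[OF mc']
      marked_cycle.card_label_le_1[OF mc] marked_cycle.card_label_le_1[OF mc'] labels
    by simp_all
  moreover have orbits: "(\<pi> ^^ k) x = (\<pi>' ^^ k) x'" for k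
    using marked_cycle.p_eq_rank[OF mc, of k] marked_cycle.p_eq_rank[OF mc', of k] order by simp
  moreover have "\<pi> = \<pi>'"
  proof
    fix y
    show "\<pi> y = \<pi>' y"
    proof (cases "y \<in> {1..n}")
      case True
      then obtain k where "(\<pi> ^^ k) x = y"
        using marked_cycle.p_bij[OF mc] unfolding bij_betw_def by (metis imageE)
      then show ?thesis using orbits[of k] orbits[of "Suc k"] by simp
    next
      case False
      then show ?thesis
        using marked_cycle.perm[OF mc] marked_cycle.perm[OF mc'] by (simp add: permutes_not_in)
    qed
  qed
  ultimately show ?thesis using orbits[of 0] by simp
qed

lemma order_transfer:
  assumes mc: "marked_cycle n \<pi> e1 e2 x" and mc': "marked_cycle n \<pi>' e1' e2' x'"
    and labels: "\<And>k. segment_label e1 e2 ((\<pi> ^^ k) x) = segment_label e1' e2' ((\<pi>' ^^ k) x')"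
    and differ: "\<exists>k. segment_label e1 e2 ((\<pi> ^^ (i + k)) x) \<noteq> segment_label e1 e2 ((\<pi> ^^ (j + k)) x)"
    and less: "(\<pi> ^^ i) x < (\<pi> ^^ j) x"
  shows "(\<pi>' ^^ i) x' < (\<pi>' ^^ j) x'"
proof (rule ccontr)
  define W where "W k = segment_label e1 e2 ((\<pi> ^^ k) x)" for k
  define k0 where "k0 = (LEAST k. W (i + k) \<noteq> W (j + k))"
  have first: "W (i + k0) \<noteq> W (j + k0)" "\<forall>l<k0. W (i + l) = W (j + l)"
    using LeastI_ex[OF differ[folded W_def]] not_less_Least unfolding k0_def by blast+
  have W': "segment_label e1' e2' ((\<pi>' ^^ k) x') = W k" for k
    using labels W_def by simp
  assume "\<not> (\<pi>' ^^ i) x' < (\<pi>' ^^ j) x'"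
  moreover have "(\<pi>' ^^ i) x' \<noteq> (\<pi>' ^^ j) x'"
  proof
    assume "(\<pi>' ^^ i) x' = (\<pi>' ^^ j) x'"
    then have "(\<pi>' ^^ (i + k0)) x' = (\<pi>' ^^ (j + k0)) x'"
      using marked_cycle.p_add[OF mc', of i k0] marked_cycle.p_add[OF mc', of j k0] by simp
    then show False using first(1) W' by metis
  qed
  ultimately have "(\<pi>' ^^ j) x' < (\<pi>' ^^ i) x'" by simp
  then have "W (j + k0) < W (i + k0) \<longleftrightarrow> even (reversals W j k0)"
    using marked_cycle.order_at_first_difference[OF mc', of k0 j i] first W'
    by (simp add: reversals_def)
  moreover have "W (i + k0) < W (j + k0) \<longleftrightarrow> even (reversals W i k0)"
    using marked_cycle.order_at_first_difference[OF mc, of k0 i j] first less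
    unfolding W_def by simp
  moreover have "reversals W j k0 = reversals W i k0"
    by (rule reversals_cong) (use first in simp)
  ultimately show False using first(1) by auto
qed

lemma order_transfer_iff:
  assumes mc: "marked_cycle n \<pi> e1 e2 x" and mc': "marked_cycle n \<pi>' e1' e2' x'"
    and labels: "\<And>k. segment_label e1 e2 ((\<pi> ^^ k) x) = segment_label e1' e2' ((\<pi>' ^^ k) x')"
    and differ: "\<exists>k. segment_label e1 e2 ((\<pi> ^^ (i + k)) x) \<noteq> segment_label e1 e2 ((\<pi> ^^ (j + k)) x)"
  shows "(\<pi> ^^ i) x < (\<pi> ^^ j) x \<longleftrightarrow> (\<pi>' ^^ i) x' < (\<pi>' ^^ j) x'"
proof
  show "(\<pi> ^^ i) x < (\<pi> ^^ j) x \<Longrightarrow> (\<pi>' ^^ i) x' < (\<pi>' ^^ j) x'"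
    using order_transfer[OF mc mc' labels differ] .
  have "\<exists>k. segment_label e1' e2' ((\<pi>' ^^ (i + k)) x') \<noteq> segment_label e1' e2' ((\<pi>' ^^ (j + k)) x')"
    using differ labels by metis
  then show "(\<pi>' ^^ i) x' < (\<pi>' ^^ j) x' \<Longrightarrow> (\<pi> ^^ i) x < (\<pi> ^^ j) x"
    using order_transfer[OF mc' mc] labels by metis
qed

lemma mod_double_cases:
  fixes i j m :: nat
  assumes "i mod m = j mod m"
  shows "j mod (2 * m) = i mod (2 * m) \<or> j mod (2 * m) = (i + m) mod (2 * m)"
proof (cases "m = 0")
  case False
  define a b where "a = i mod (2 * m)" and "b = j mod (2 * m)"
  have ab: "a < 2 * m" "b < 2 * m" "a mod m = b mod m"
    using False assms by (simp_all add: a_def b_def mod_mod_cancel)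
  have "(i + m) mod (2 * m) = (a + m) mod (2 * m)"
    by (simp add: a_def mod_add_left_eq)
  also have "\<dots> = (if a < m then a + m else a - m)"
    using ab(1) by (simp add: mod_if)
  finally have shift: "(i + m) mod (2 * m) = (if a < m then a + m else a - m)" .
  show ?thesis
    using ab unfolding shift a_def[symmetric] b_def[symmetric]
    by (cases "a < m"; cases "b < m") (auto simp: le_mod_geq)
qed (use assms in simp)

lemma itinerary_inj_primitive:
  assumes mc: "marked_cycle n \<pi> e1 e2 x" and mc': "marked_cycle n \<pi>' e1' e2' x'"
    and w: "itinerary n \<pi> e1 e2 x = itinerary n \<pi>' e1' e2' x'"
    and prim: "primitive_word (itinerary n \<pi> e1 e2 x)"
  shows "(\<pi>, e1, e2, x) = (\<pi>', e1', e2', x')"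
proof (rule marked_cycle_eqI[OF mc mc' w])
  fix i j
  note labels = same_itinerary_labels[OF mc mc' w]
  show "(\<pi> ^^ i) x < (\<pi> ^^ j) x \<longleftrightarrow> (\<pi>' ^^ i) x' < (\<pi>' ^^ j) x'"
  proof (cases "\<exists>k. segment_label e1 e2 ((\<pi> ^^ (i + k)) x) \<noteq> segment_label e1 e2 ((\<pi> ^^ (j + k)) x)")
    case True
    then show ?thesis using order_transfer_iff[OF mc mc' labels] by blast
  next
    case False
    then have "i mod n = j mod n"
      using marked_cycle.rotate_itinerary_eq_if_same_labels[OF mc, of i j]
        primitive_word_rotate_eq_iff[OF prim] marked_cycle.length_itinerary[OF mc] by simp
    then have "(\<pi> ^^ i) x = (\<pi> ^^ j) x" "(\<pi>' ^^ i) x' = (\<pi>' ^^ j) x'"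
      using marked_cycle.p_eq_iff[OF mc] marked_cycle.p_eq_iff[OF mc'] by simp_all
    then show ?thesis by simp
  qed
qed

lemma itinerary_inj_square:
  assumes mc: "marked_cycle n \<pi> e1 e2 x" and mc': "marked_cycle n \<pi>' e1' e2' x'"
    and w: "itinerary n \<pi> e1 e2 x = itinerary n \<pi>' e1' e2' x'"
    and square: "n = 2 * m" "itinerary n \<pi> e1 e2 x = q @ q" "length q = m"
    and prim: "primitive_word q"
    and same_start: "x < (\<pi> ^^ m) x \<longleftrightarrow> x' < (\<pi>' ^^ m) x'"
  shows "(\<pi>, e1, e2, x) = (\<pi>', e1', e2', x')"
proof (rule marked_cycle_eqI[OF mc mc' w])
  fix i j
  note labels = same_itinerary_labels[OF mc mc' w]
  have per: "\<forall>l. segment_label e1 e2 ((\<pi> ^^ (l + m)) x) = segment_label e1 e2 ((\<pi> ^^ l) x)"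
    using marked_cycle.W_square[OF mc square] by simp
  then have per': "\<forall>l. segment_label e1' e2' ((\<pi>' ^^ (l + m)) x') = segment_label e1' e2' ((\<pi>' ^^ l) x')"
    using labels by simp
  have "reversals (\<lambda>k. segment_label e1 e2 ((\<pi> ^^ k) x)) 0 i =
      reversals (\<lambda>k. segment_label e1' e2' ((\<pi>' ^^ k) x')) 0 i"
    by (rule reversals_cong) (use labels in simp)
  then have antipodes: "(\<pi> ^^ i) x < (\<pi> ^^ (i + m)) x \<longleftrightarrow> (\<pi>' ^^ i) x' < (\<pi>' ^^ (i + m)) x'"
    using marked_cycle.order_of_antipodes[OF mc square(1) per, of i]
      marked_cycle.order_of_antipodes[OF mc' square(1) per', of i] same_start by simp
  show "(\<pi> ^^ i) x < (\<pi> ^^ j) x \<longleftrightarrow> (\<pi>' ^^ i) x' < (\<pi>' ^^ j) x'"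
  proof (cases "\<exists>k. segment_label e1 e2 ((\<pi> ^^ (i + k)) x) \<noteq> segment_label e1 e2 ((\<pi> ^^ (j + k)) x)")
    case True
    then show ?thesis using order_transfer_iff[OF mc mc' labels] by blast
  next
    case False
    then have "i mod m = j mod m"
      using marked_cycle.rotate_half_eq_if_same_labels[OF mc square, of i j]
        primitive_word_rotate_eq_iff[OF prim] square(3) by simp
    then consider "j mod n = i mod n" | "j mod n = (i + m) mod n"
      using mod_double_cases square(1) by blast
    then show ?thesis
    proof cases
      case 1
      then have "(\<pi> ^^ i) x = (\<pi> ^^ j) x" "(\<pi>' ^^ i) x' = (\<pi>' ^^ j) x'"
        using marked_cycle.p_eq_iff[OF mc] marked_cycle.p_eq_iff[OF mc'] square(1) by simp_all
      then show ?thesis by simp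
    next
      case 2
      then have "(\<pi> ^^ j) x = (\<pi> ^^ (i + m)) x" "(\<pi>' ^^ j) x' = (\<pi>' ^^ (i + m)) x'"
        using marked_cycle.p_eq_iff[OF mc] marked_cycle.p_eq_iff[OF mc'] by simp_all
      then show ?thesis using antipodes by simp
    qed
  qed
qed

section \<open>Every primitive word is an itinerary\<close>

lemma less_fun_total:
  fixes f g :: "nat \<Rightarrow> 'b::linorder"
  assumes "f \<noteq> g"
  shows "less_fun f g \<or> less_fun g f"
proof -
  have "\<exists>k. f k \<noteq> g k" using assms by auto
  then obtain k where k: "f k \<noteq> g k" "\<And>l. l < k \<Longrightarrow> f l = g l"
    using exists_least_iff[of "\<lambda>k. f k \<noteq> g k"] by blast
  then show ?thesis
    by (cases "f k < g k") (auto intro!: less_funI simp: not_less_iff_gr_or_eq)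
qed

definition cyc_nth :: "nat list \<Rightarrow> nat \<Rightarrow> nat" where
  "cyc_nth w k = w ! (k mod length w)"

text \<open>The itinerary read from position \<open>i\<close> with the alphabet reversed after every reversal;
  orbit points are ordered lexicographically by these keys.\<close>

definition twisted_key :: "nat list \<Rightarrow> nat \<Rightarrow> nat \<Rightarrow> nat" where
  "twisted_key w i k =
    (if odd (reversals (cyc_nth w) i k) then 2 - cyc_nth w (i + k) else cyc_nth w (i + k))"

lemma cyc_nth_le_2:
  assumes "set w \<subseteq> {0..<3}" "w \<noteq> []"
  shows "cyc_nth w k \<le> 2"
proof -
  have "w ! (k mod length w) \<in> set w" using assms(2) by simp
  then show ?thesis using assms(1) unfolding cyc_nth_def by auto
qed

lemma cyc_nth_mod: "cyc_nth w (k mod length w) = cyc_nth w k"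
  unfolding cyc_nth_def by simp

lemma twisted_key_0: "twisted_key w i 0 = cyc_nth w i"
  by (simp add: twisted_key_def)

lemma twisted_key_le_2:
  assumes "set w \<subseteq> {0..<3}" "w \<noteq> []"
  shows "twisted_key w i k \<le> 2"
  using cyc_nth_le_2[OF assms] by (simp add: twisted_key_def)

lemma twisted_key_Suc:
  assumes "set w \<subseteq> {0..<3}" "w \<noteq> []"
  shows "twisted_key w (Suc i) k =
    (if cyc_nth w i \<noteq> 1 then 2 - twisted_key w i (Suc k) else twisted_key w i (Suc k))"
  using cyc_nth_le_2[OF assms, of "Suc i + k"] reversals_Suc_left[of "cyc_nth w" i k]
    twisted_key_le_2[OF assms, of "Suc i" k]
  by (auto simp: twisted_key_def)

lemma twisted_key_mod: "twisted_key w (i mod length w) = twisted_key w i"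
proof
  fix k
  have "reversals (cyc_nth w) (i mod length w) k = reversals (cyc_nth w) i k"
    by (rule reversals_cong) (metis cyc_nth_mod mod_add_left_eq)
  moreover have "cyc_nth w (i mod length w + k) = cyc_nth w (i + k)"
    by (metis cyc_nth_mod mod_add_left_eq)
  ultimately show "twisted_key w (i mod length w) k = twisted_key w i k"
    by (simp add: twisted_key_def)
qed

lemma cyc_nth_eq_if_twisted_key_eq:
  assumes "set w \<subseteq> {0..<3}" "w \<noteq> []" "twisted_key w i = twisted_key w j"
  shows "cyc_nth w (i + k) = cyc_nth w (j + k)"
proof (induction k rule: less_induct)
  case (less k)
  have "reversals (cyc_nth w) i k = reversals (cyc_nth w) j k"
    by (rule reversals_cong) (use less in simp)
  moreover have "twisted_key w i k = twisted_key w j k" using assms(3) by simp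
  ultimately show ?case
    using cyc_nth_le_2[OF assms(1,2), of "i + k"] cyc_nth_le_2[OF assms(1,2), of "j + k"]
    by (auto simp: twisted_key_def split: if_splits)
qed

lemma rotate_eq_if_twisted_key_eq:
  assumes "set w \<subseteq> {0..<3}" "w \<noteq> []" "twisted_key w i = twisted_key w j"
  shows "rotate i w = rotate j w"
  using cyc_nth_eq_if_twisted_key_eq[OF assms]
  by (intro rotate_eq_if_nth_shift_eq) (simp add: cyc_nth_def)

lemma less_fun_twisted_key_Suc:
  assumes w: "set w \<subseteq> {0..<3}" "w \<noteq> []"
    and less: "less_fun (twisted_key w i) (twisted_key w j)" and same: "cyc_nth w i = cyc_nth w j"
  shows "if cyc_nth w i = 1 then less_fun (twisted_key w (Suc i)) (twisted_key w (Suc j))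
    else less_fun (twisted_key w (Suc j)) (twisted_key w (Suc i))"
proof -
  obtain k where k: "twisted_key w i k < twisted_key w j k"
    "\<And>l. l < k \<Longrightarrow> twisted_key w i l = twisted_key w j l"
    using less unfolding less_fun_def by blast
  have "k \<noteq> 0"
  proof
    assume "k = 0"
    then show False using k(1) same by (simp add: twisted_key_0)
  qed
  then obtain k' where k': "k = Suc k'" using not0_implies_Suc by blast
  note shift = twisted_key_Suc[OF w]
  have prefix: "twisted_key w (Suc i) l = twisted_key w (Suc j) l" if "l < k'" for l
    using k(2)[of "Suc l"] that shift[of i l] shift[of j l] same k' by simp
  show ?thesis
  proof (cases "cyc_nth w i = 1")
    case True
    then have "twisted_key w (Suc i) k' < twisted_key w (Suc j) k'"
      using k(1) k' shift[of i k'] shift[of j k'] same by simp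
    then have "less_fun (twisted_key w (Suc i)) (twisted_key w (Suc j))"
      using prefix by (intro less_funI exI[of _ k']) simp
    then show ?thesis using True by simp
  next
    case False
    then have "twisted_key w (Suc j) k' < twisted_key w (Suc i) k'"
      using k(1) k' shift[of i k'] shift[of j k'] same
        twisted_key_le_2[OF w, of i "Suc k'"] twisted_key_le_2[OF w, of j "Suc k'"] by simp
    then have "less_fun (twisted_key w (Suc j)) (twisted_key w (Suc i))"
      using prefix by (intro less_funI exI[of _ k']) simp
    then show ?thesis using False by simp
  qed
qed

text \<open>The tiebreak only matters for squares \<open>q @ q\<close>, where positions \<open>a\<close> and \<open>a + m\<close>
  share their key; it orders them by the parity of the reversals before \<open>a\<close>, as in
  \<open>marked_cycle.order_of_antipodes\<close>.\<close>

definition tiebreak :: "nat list \<Rightarrow> nat \<Rightarrow> nat" where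
  "tiebreak w i =
    (if (i < length w div 2) = even (reversals (cyc_nth w) 0 (i mod (length w div 2))) then 0 else 1)"

definition position_less :: "nat list \<Rightarrow> nat \<Rightarrow> nat \<Rightarrow> bool" where
  "position_less w i j \<longleftrightarrow> less_fun (twisted_key w i) (twisted_key w j) \<or>
    (twisted_key w i = twisted_key w j \<and> tiebreak w i < tiebreak w j)"

locale realizable_word =
  fixes w :: "nat list"
  assumes nonempty: "w \<noteq> []" and letters: "set w \<subseteq> {0..<3}"
    and tiebreak_distinct: "\<And>i j. i < length w \<Longrightarrow> j < length w \<Longrightarrow> i \<noteq> j \<Longrightarrow>
      twisted_key w i = twisted_key w j \<Longrightarrow> tiebreak w i \<noteq> tiebreak w j"
    and tiebreak_step: "\<And>i j. i < length w \<Longrightarrow> j < length w \<Longrightarrow>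
      twisted_key w i = twisted_key w j \<Longrightarrow> tiebreak w i < tiebreak w j \<Longrightarrow>
      (if cyc_nth w i = 1 then tiebreak w (Suc i mod length w) < tiebreak w (Suc j mod length w)
       else tiebreak w (Suc j mod length w) < tiebreak w (Suc i mod length w))"
begin

abbreviation N where "N \<equiv> length w"

lemma N_pos: "0 < N"
  using nonempty by simp

lemma position_less_irrefl: "\<not> position_less w i i"
  unfolding position_less_def using less_fun_irrefl by auto

lemma position_less_trans: "position_less w i j \<Longrightarrow> position_less w j k \<Longrightarrow> position_less w i k"
  unfolding position_less_def using less_fun_trans by auto

lemma position_less_asym: "position_less w i j \<Longrightarrow> \<not> position_less w j i"
  using position_less_trans position_less_irrefl by blast

lemma position_less_total:
  "i < N \<Longrightarrow> j < N \<Longrightarrow> i \<noteq> j \<Longrightarrow> position_less w i j \<or> position_less w j i"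
  unfolding position_less_def using less_fun_total tiebreak_distinct by (metis linorder_neqE_nat)

lemma position_less_if_label_less:
  "cyc_nth w i < cyc_nth w j \<Longrightarrow> position_less w i j"
  unfolding position_less_def by (intro disjI1 less_funI exI[of _ 0]) (simp add: twisted_key_0)

definition rank :: "nat \<Rightarrow> nat" where
  "rank i = card {j \<in> {..<N}. position_less w j i} + 1"

lemma rank_less_if_position_less:
  assumes "position_less w i j" "i < N"
  shows "rank i < rank j"
proof -
  have "{l \<in> {..<N}. position_less w l i} \<subseteq> {l \<in> {..<N}. position_less w l j}"
    using position_less_trans assms(1) by blast
  moreover have "i \<in> {l \<in> {..<N}. position_less w l j} - {l \<in> {..<N}. position_less w l i}"
    using assms position_less_irrefl by simp
  ultimately have "{l \<in> {..<N}. position_less w l i} \<subset> {l \<in> {..<N}. position_less w l j}"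
    by blast
  then show ?thesis unfolding rank_def by (simp add: psubset_card_mono)
qed

lemma rank_less_iff:
  assumes "i < N" "j < N"
  shows "rank i < rank j \<longleftrightarrow> position_less w i j"
proof
  assume "rank i < rank j"
  then have "i \<noteq> j" "\<not> rank j < rank i" by auto
  then show "position_less w i j"
    using position_less_total[OF assms] rank_less_if_position_less[of j i] assms(2) by blast
qed (use rank_less_if_position_less assms in blast)

lemma rank_bij: "bij_betw rank {..<N} {1..N}"
proof -
  have inj: "inj_on rank {..<N}"
  proof (rule linorder_inj_onI')
    fix i j assume "i \<in> {..<N}" "j \<in> {..<N}" "i < j"
    then show "rank i \<noteq> rank j"
      using position_less_total[of i j] rank_less_iff[of i j] rank_less_iff[of j i] by auto
  qed
  moreover have "rank ` {..<N} \<subseteq> {1..N}"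
  proof
    fix y assume "y \<in> rank ` {..<N}"
    then obtain i where i: "i < N" "y = rank i" by blast
    have "{j \<in> {..<N}. position_less w j i} \<subseteq> {..<N} - {i}"
      using position_less_irrefl by auto
    then have "card {j \<in> {..<N}. position_less w j i} \<le> N - 1"
      using card_mono[of "{..<N} - {i}"] i(1) by fastforce
    then show "y \<in> {1..N}" using i N_pos unfolding rank_def by simp
  qed
  ultimately have "rank ` {..<N} = {1..N}"
    by (intro card_subset_eq) (simp_all add: card_image)
  then show ?thesis using inj unfolding bij_betw_def by simp
qed

lemma rank_in: "i < N \<Longrightarrow> rank i \<in> {1..N}"
  using rank_bij unfolding bij_betw_def by auto

lemma obtain_rank:
  assumes "y \<in> {1..N}"
  obtains i where "i < N" "y = rank i"
  using assms rank_bij unfolding bij_betw_def by (metis imageE lessThan_iff)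

definition label_count :: "nat \<Rightarrow> nat" where
  "label_count c = card {j \<in> {..<N}. cyc_nth w j \<le> c}"

lemma rank_le_label_count_iff:
  assumes "i < N"
  shows "rank i \<le> label_count c \<longleftrightarrow> cyc_nth w i \<le> c"
proof
  assume "cyc_nth w i \<le> c"
  have "{j \<in> {..<N}. position_less w j i} \<subset> {j \<in> {..<N}. cyc_nth w j \<le> c}"
  proof (rule psubsetI)
    show "{j \<in> {..<N}. position_less w j i} \<subseteq> {j \<in> {..<N}. cyc_nth w j \<le> c}"
    proof (intro subsetI CollectI conjI)
      fix j assume j: "j \<in> {j \<in> {..<N}. position_less w j i}"
      then show "j \<in> {..<N}" by simp
      show "cyc_nth w j \<le> c"
      proof (rule ccontr)
        assume "\<not> cyc_nth w j \<le> c"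
        then have "position_less w i j"
          using position_less_if_label_less \<open>cyc_nth w i \<le> c\<close> by simp
        then show False using position_less_asym j by blast
      qed
    qed
    show "{j \<in> {..<N}. position_less w j i} \<noteq> {j \<in> {..<N}. cyc_nth w j \<le> c}"
      using position_less_irrefl assms \<open>cyc_nth w i \<le> c\<close> by blast
  qed
  then show "rank i \<le> label_count c"
    unfolding rank_def label_count_def by (simp add: psubset_card_mono Suc_le_eq)
next
  assume "rank i \<le> label_count c"
  show "cyc_nth w i \<le> c"
  proof (rule ccontr)
    assume "\<not> cyc_nth w i \<le> c"
    then have "{j \<in> {..<N}. cyc_nth w j \<le> c} \<subseteq> {j \<in> {..<N}. position_less w j i}"
      using position_less_if_label_less by auto
    then have "label_count c \<le> card {j \<in> {..<N}. position_less w j i}"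
      unfolding label_count_def by (intro card_mono) auto
    then show False using \<open>rank i \<le> label_count c\<close> unfolding rank_def by simp
  qed
qed

lemma segment_label_rank:
  "i < N \<Longrightarrow> segment_label (label_count 0) (label_count 1) (rank i) = cyc_nth w i"
  using rank_le_label_count_iff[of i 0] rank_le_label_count_iff[of i 1]
    cyc_nth_le_2[OF letters nonempty, of i]
  unfolding segment_label_def by auto

lemma position_less_Suc:
  assumes "i < N" "j < N" "position_less w i j" "cyc_nth w i = cyc_nth w j"
  shows "if cyc_nth w i = 1 then position_less w (Suc i mod N) (Suc j mod N)
    else position_less w (Suc j mod N) (Suc i mod N)"
proof (cases "less_fun (twisted_key w i) (twisted_key w j)")
  case True
  then show ?thesis
    using less_fun_twisted_key_Suc[OF letters nonempty True assms(4)]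
    unfolding position_less_def by (simp add: twisted_key_mod)
next
  case False
  then have tie: "twisted_key w i = twisted_key w j" "tiebreak w i < tiebreak w j"
    using assms(3) unfolding position_less_def by auto
  have "twisted_key w (Suc i) l = twisted_key w (Suc j) l" for l
    using twisted_key_Suc[OF letters nonempty, of i l] twisted_key_Suc[OF letters nonempty, of j l]
      tie(1) assms(4) by simp
  then have "twisted_key w (Suc i) = twisted_key w (Suc j)" by (rule ext)
  then have "twisted_key w (Suc i mod N) = twisted_key w (Suc j mod N)"
    by (simp add: twisted_key_mod)
  then show ?thesis
    using tiebreak_step[OF assms(1,2) tie] unfolding position_less_def by simp
qed

definition succ_perm :: "nat \<Rightarrow> nat" where
  "succ_perm y = (if y \<in> {1..N} then rank (Suc (inv_into {..<N} rank y) mod N) else y)"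

lemma succ_perm_rank: "i < N \<Longrightarrow> succ_perm (rank i) = rank (Suc i mod N)"
  unfolding succ_perm_def using rank_in rank_bij by (simp add: bij_betw_def)

lemma funpow_succ_perm_rank: "i < N \<Longrightarrow> (succ_perm ^^ k) (rank i) = rank ((i + k) mod N)"
proof (induction k)
  case (Suc k)
  then have "(succ_perm ^^ Suc k) (rank i) = rank (Suc ((i + k) mod N) mod N)"
    using succ_perm_rank N_pos by simp
  then show ?case by (simp add: mod_Suc_eq)
qed simp

lemma succ_perm_permutes: "succ_perm permutes {1..N}"
proof (rule bij_imp_permutes)
  have "bij_betw (\<lambda>i. Suc i mod N) {..<N} {..<N}"
    by (rule bij_betw_byWitness[where f' = "\<lambda>i. (i + N - 1) mod N"])
      (use N_pos in \<open>auto simp: mod_Suc_eq_mod_add3 mod_if\<close>)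
  then have "bij_betw (rank \<circ> (\<lambda>i. Suc i mod N)) {..<N} {1..N}"
    using bij_betw_trans rank_bij by blast
  then have "bij_betw (rank \<circ> (\<lambda>i. Suc i mod N) \<circ> inv_into {..<N} rank) {1..N} {1..N}"
    using bij_betw_trans[OF bij_betw_inv_into[OF rank_bij]] by blast
  moreover have "\<And>y. y \<in> {1..N} \<Longrightarrow> succ_perm y = (rank \<circ> (\<lambda>i. Suc i mod N) \<circ> inv_into {..<N} rank) y"
    unfolding succ_perm_def by simp
  ultimately show "bij_betw succ_perm {1..N} {1..N}"
    using bij_betw_cong by blast
next
  fix y assume "y \<notin> {1..N}"
  then show "succ_perm y = y" unfolding succ_perm_def by (simp only: if_False)
qed

lemma cyclic_perm_succ_perm: "cyclic_perm N succ_perm"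
  unfolding cyclic_perm_def
proof (intro conjI ballI)
  fix y z assume "y \<in> {1..N}" "z \<in> {1..N}"
  then obtain a b where "a < N" "y = rank a" "b < N" "z = rank b" by (metis obtain_rank)
  then have "(succ_perm ^^ (b + N - a)) y = z" using funpow_succ_perm_rank by simp
  then show "\<exists>j. (succ_perm ^^ j) y = z" by blast
qed (rule succ_perm_permutes)

lemma succ_perm_order_in_segment:
  assumes "y \<in> {1..N}" "y' \<in> {1..N}" "y < y'"
    and same: "segment_label (label_count 0) (label_count 1) y = segment_label (label_count 0) (label_count 1) y'"
  shows "if segment_label (label_count 0) (label_count 1) y = 1 then succ_perm y < succ_perm y'
    else succ_perm y' < succ_perm y"
proof -
  obtain i j where ij: "i < N" "y = rank i" "j < N" "y' = rank j"
    using assms(1,2) by (metis obtain_rank)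
  have "Suc i mod N < N" "Suc j mod N < N" using N_pos by auto
  moreover have "position_less w i j" using rank_less_iff ij assms(3) by simp
  moreover have "cyc_nth w i = cyc_nth w j" using same segment_label_rank ij by simp
  ultimately show ?thesis
    using position_less_Suc[OF ij(1,3)] rank_less_iff succ_perm_rank ij segment_label_rank
    by (auto split: if_splits)
qed

lemma label_count_mono: "c \<le> d \<Longrightarrow> label_count c \<le> label_count d"
  unfolding label_count_def by (intro card_mono) auto

lemma label_count_le: "label_count c \<le> N"
proof -
  have "label_count c \<le> card {..<N}" unfolding label_count_def by (intro card_mono) auto
  then show ?thesis by simp
qed

lemma mpm_breakpoints_succ_perm: "mpm_breakpoints N succ_perm (label_count 0) (label_count 1)"
  unfolding mpm_breakpoints_def
proof (intro conjI allI impI)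
  note bounds = label_count_mono[of 0 1] label_count_le[of 1]
  note order = succ_perm_order_in_segment
  show "label_count 0 \<le> label_count 1" "label_count 1 \<le> N" using bounds by simp_all
  fix j j'
  show "succ_perm j' < succ_perm j" if "0 < j \<and> j < j' \<and> j' \<le> label_count 0"
    using order[of j j'] that bounds by (simp add: segment_label_def)
  show "succ_perm j < succ_perm j'" if "label_count 0 < j \<and> j < j' \<and> j' \<le> label_count 1"
    using order[of j j'] that bounds by (simp add: segment_label_def)
  show "succ_perm j' < succ_perm j" if "label_count 1 < j \<and> j < j' \<and> j' \<le> N"
    using order[of j j'] that bounds by (simp add: segment_label_def)
qed

lemma exists_marked_cycle: "\<exists>\<pi> e1 e2 x. marked_cycle N \<pi> e1 e2 x \<and> itinerary N \<pi> e1 e2 x = w"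
proof (intro exI conjI)
  show "marked_cycle N succ_perm (label_count 0) (label_count 1) (rank 0)"
    using cyclic_perm_succ_perm mpm_breakpoints_succ_perm rank_in[OF N_pos]
    by unfold_locales
  show "itinerary N succ_perm (label_count 0) (label_count 1) (rank 0) = w"
  proof (rule nth_equalityI)
    fix k assume "k < length (itinerary N succ_perm (label_count 0) (label_count 1) (rank 0))"
    then have "k < N" by (simp add: itinerary_def)
    then show "itinerary N succ_perm (label_count 0) (label_count 1) (rank 0) ! k = w ! k"
      using funpow_succ_perm_rank[OF N_pos, of k] segment_label_rank[of k]
      by (simp add: itinerary_def cyc_nth_def)
  qed (simp add: itinerary_def)
qed

end

lemma realizable_word_if_primitive:
  assumes "w \<noteq> []" "set w \<subseteq> {0..<3}" "primitive_word w"
  shows "realizable_word w"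
proof -
  have distinct_keys: "i = j" if "i < length w" "j < length w" "twisted_key w i = twisted_key w j" for i j
    using rotate_eq_if_twisted_key_eq[OF assms(2,1) that(3)] primitive_word_rotate_eq_iff[OF assms(3)]
      that(1,2) by simp
  show ?thesis
    by unfold_locales (use assms distinct_keys in \<open>simp_all, blast\<close>)
qed

locale square_word =
  fixes q :: "nat list" and m :: nat
  assumes length_q: "length q = m" and m_pos: "0 < m" and primitive: "primitive_word q"
    and letters_q: "set q \<subseteq> {0..<3}" and odd_reversals: "odd (reversals (cyc_nth (q @ q)) 0 m)"
begin

abbreviation w where "w \<equiv> q @ q"

abbreviation even_before where "even_before a \<equiv> even (reversals (cyc_nth w) 0 a)"

lemma cyc_nth_square: "cyc_nth w l = q ! (l mod m)"
proof -
  have "cyc_nth w l = (q @ q) ! (l mod (2 * m))"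
    unfolding cyc_nth_def using length_q by (simp add: mult_2)
  also have "\<dots> = q ! (l mod m)"
    using nth_append_self[of "l mod (2 * m)" q] length_q m_pos by (simp add: mod_mod_cancel)
  finally show ?thesis .
qed

lemma twisted_key_eq_imp_mod_eq:
  assumes "twisted_key w i = twisted_key w j"
  shows "i mod m = j mod m"
proof -
  have "cyc_nth w (i + k) = cyc_nth w (j + k)" for k
    using cyc_nth_eq_if_twisted_key_eq[OF _ _ assms] letters_q m_pos length_q by auto
  then have "rotate i q = rotate j q"
    using length_q by (intro rotate_eq_if_nth_shift_eq) (simp add: cyc_nth_square)
  then show ?thesis using primitive_word_rotate_eq_iff[OF primitive] length_q by simp
qed

lemma tiebreak_low: "a < m \<Longrightarrow> tiebreak w a = (if even_before a then 0 else 1)"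
  unfolding tiebreak_def using length_q by simp

lemma tiebreak_high: "a < m \<Longrightarrow> tiebreak w (a + m) = (if even_before a then 1 else 0)"
  unfolding tiebreak_def using length_q by simp

lemma even_before_Suc: "even_before (Suc a) \<longleftrightarrow> (even_before a \<longleftrightarrow> cyc_nth w a = 1)"
  by (simp add: reversals_Suc)

lemma same_key_cases:
  assumes "i < 2 * m" "j < 2 * m" "i \<noteq> j" "twisted_key w i = twisted_key w j"
  shows "(i = i mod m \<and> j = i mod m + m) \<or> (i = i mod m + m \<and> j = i mod m)"
proof -
  have "j mod m = i mod m" using twisted_key_eq_imp_mod_eq[OF assms(4)] by simp
  moreover have "k = k mod m \<or> k = k mod m + m" if "k < 2 * m" for k
    using that m_pos by (cases "k < m") (auto simp: le_mod_geq)
  ultimately show ?thesis using assms(1-3) by metis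
qed

lemma square_tiebreak_distinct:
  assumes "i < 2 * m" "j < 2 * m" "i \<noteq> j" "twisted_key w i = twisted_key w j"
  shows "tiebreak w i \<noteq> tiebreak w j"
proof -
  have "tiebreak w (i mod m) \<noteq> tiebreak w (i mod m + m)"
    using tiebreak_low[of "i mod m"] tiebreak_high[of "i mod m"] m_pos by simp
  then show ?thesis using same_key_cases[OF assms] by metis
qed

lemma square_tiebreak_step:
  assumes "i < 2 * m" "j < 2 * m" "twisted_key w i = twisted_key w j" "tiebreak w i < tiebreak w j"
  shows "if cyc_nth w i = 1 then tiebreak w (Suc i mod (2 * m)) < tiebreak w (Suc j mod (2 * m))
    else tiebreak w (Suc j mod (2 * m)) < tiebreak w (Suc i mod (2 * m))"
proof -
  define a where "a = i mod m"
  have "a < m" using m_pos by (simp add: a_def)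
  have "i \<noteq> j" using assms(4) by auto
  then have ij: "(even_before a \<and> i = a \<and> j = a + m) \<or> (\<not> even_before a \<and> i = a + m \<and> j = a)"
    using same_key_cases[OF assms(1,2) \<open>i \<noteq> j\<close> assms(3)] assms(4) tiebreak_low[OF \<open>a < m\<close>]
      tiebreak_high[OF \<open>a < m\<close>] unfolding a_def by auto
  have label: "cyc_nth w i = cyc_nth w a" by (simp add: cyc_nth_square a_def)
  show ?thesis
  proof (cases "Suc a < m")
    case True
    have "Suc a mod (2 * m) = Suc a" "Suc (a + m) mod (2 * m) = Suc a + m" using True by auto
    then show ?thesis
      using ij label even_before_Suc[of a] tiebreak_low[OF True] tiebreak_high[OF True]
      by (auto split: if_splits)
  next
    case False
    then have "Suc a = m" using \<open>a < m\<close> by simp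
    have "Suc (a + m) = 2 * m" using \<open>Suc a = m\<close> by simp
    then have "Suc a mod (2 * m) = 0 + m" "Suc (a + m) mod (2 * m) = 0"
      using \<open>Suc a = m\<close> m_pos by (simp, simp only: mod_self)
    moreover have "\<not> even_before (Suc a)" using odd_reversals \<open>Suc a = m\<close> by simp
    ultimately show ?thesis
      using ij label even_before_Suc[of a] tiebreak_low[OF m_pos] tiebreak_high[OF m_pos]
      by (auto split: if_splits)
  qed
qed

lemma realizable_word_square: "realizable_word w"
proof
  have len: "length w = 2 * m" using length_q by simp
  show "w \<noteq> []" "set w \<subseteq> {0..<3}" using m_pos length_q letters_q by auto
  show "tiebreak w i \<noteq> tiebreak w j"
    if "i < length w" "j < length w" "i \<noteq> j" "twisted_key w i = twisted_key w j" for i j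
    using square_tiebreak_distinct that unfolding len by blast
  show "if cyc_nth w i = 1 then tiebreak w (Suc i mod length w) < tiebreak w (Suc j mod length w)
      else tiebreak w (Suc j mod length w) < tiebreak w (Suc i mod length w)"
    if "i < length w" "j < length w" "twisted_key w i = twisted_key w j"
      "tiebreak w i < tiebreak w j" for i j
    using square_tiebreak_step that unfolding len by blast
qed

end

section \<open>Counting\<close>

lemma o_sig_mpm:
  assumes "set s \<subseteq> {0..<3}"
  shows "o_sig [Minus, Plus, Minus] s = length (filter (\<lambda>c. c \<noteq> 1) s)"
proof -
  have "(c < length [Minus, Plus, Minus] \<and> [Minus, Plus, Minus] ! c = Minus) \<longleftrightarrow> c \<noteq> 1"
    if "c \<in> set s" for c
  proof -
    have "c = 0 \<or> c = 1 \<or> c = 2" using assms that by auto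
    then show ?thesis by auto
  qed
  then have "filter (\<lambda>c. c < length [Minus, Plus, Minus] \<and> [Minus, Plus, Minus] ! c = Minus) s =
      filter (\<lambda>c. c \<noteq> 1) s"
    by (rule filter_cong[OF refl])
  then show ?thesis unfolding o_sig_def by simp
qed

lemma L_sig_half_even: "L_sig k (real (2 * m) / 2) \<sigma> =
    card (necklace ` {s \<in> words k m. primitive_word s \<and> odd (o_sig \<sigma> s)})"
  unfolding L_sig_def by simp

lemma L_sig_half_odd:
  assumes "odd n"
  shows "L_sig k (real n / 2) \<sigma> = 0"
proof -
  have "real n / 2 \<notin> \<nat>"
  proof
    assume "real n / 2 \<in> \<nat>"
    then obtain j where "real n / 2 = real j" by (auto elim: Nats_cases)
    then have "n = 2 * j" by linarith
    then show False using assms by simp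
  qed
  then show ?thesis unfolding L_sig_def by simp
qed

definition marked_cycles :: "nat \<Rightarrow> ((nat \<Rightarrow> nat) \<times> nat \<times> nat \<times> nat) set" where
  "marked_cycles n = {(\<pi>, e1, e2, x). marked_cycle n \<pi> e1 e2 x}"

definition itinerary_of :: "nat \<Rightarrow> (nat \<Rightarrow> nat) \<times> nat \<times> nat \<times> nat \<Rightarrow> nat list" where
  "itinerary_of n = (\<lambda>(\<pi>, e1, e2, x). itinerary n \<pi> e1 e2 x)"

lemma marked_cycle_iff:
  "marked_cycle n \<pi> e1 e2 x \<longleftrightarrow> cyclic_perm n \<pi> \<and> mpm_breakpoints n \<pi> e1 e2 \<and> x \<in> {1..n}"
  unfolding marked_cycle_def by blast

lemma card_marked_cycles:
  assumes "3 \<le> n"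
  shows "card (marked_cycles n) = n * (4 * c4 n)"
proof -
  define C where "C = cyc_class [Minus, Plus, Minus] n"
  define B where "B \<pi> = {(e1, e2). mpm_breakpoints n \<pi> e1 e2}" for \<pi>
  define V where "V = {(\<pi>, e1, e2). cyclic_perm n \<pi> \<and> mpm_breakpoints n \<pi> e1 e2}"
  have "V = Sigma C B"
    unfolding V_def C_def B_def cyc_class_def
    using in_sigma_class_mpm_iff cyclic_perm_permutes by auto
  moreover have "finite C"
    by (rule finite_subset[of _ "{\<pi>. \<pi> permutes {1..n}}"])
      (auto simp: C_def cyc_class_def cyclic_perm_def finite_permutations)
  moreover have "finite (B \<pi>)" for \<pi>
    by (rule finite_subset[of _ "{0..n} \<times> {0..n}"]) (auto simp: B_def mpm_breakpoints_def)
  moreover have "card (B \<pi>) = 4" if "\<pi> \<in> C" for \<pi>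
    using that card_mpm_breakpoints[OF _ assms] in_sigma_class_mpm_iff
    unfolding C_def cyc_class_def B_def by blast
  ultimately have "card V = 4 * card C"
    by (simp add: card_SigmaI)
  moreover have "marked_cycles n = (\<lambda>((\<pi>, e1, e2), x). (\<pi>, e1, e2, x)) ` (V \<times> {1..n})"
    unfolding marked_cycles_def V_def marked_cycle_iff by (auto simp: image_iff)
  moreover have "inj_on (\<lambda>((\<pi>, e1, e2), x). (\<pi>, e1, e2, x)) (V \<times> {1..n})"
    by (auto simp: inj_on_def)
  ultimately show ?thesis
    by (simp add: card_image card_cartesian_product C_def c4_def)
qed

lemma card_itinerary_fiber_primitive:
  assumes "3 \<le> n" "w \<in> words 3 n" "primitive_word w"
  shows "card {t \<in> marked_cycles n. itinerary_of n t = w} = 1"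
proof -
  have "length w = n" "set w \<subseteq> {0..<3}" using assms(2) unfolding words_def by auto
  moreover have "w \<noteq> []" using \<open>length w = n\<close> assms(1) by auto
  ultimately obtain \<pi> e1 e2 x where t: "marked_cycle n \<pi> e1 e2 x" "itinerary n \<pi> e1 e2 x = w"
    using realizable_word.exists_marked_cycle[OF realizable_word_if_primitive] assms(3) by metis
  have "{t \<in> marked_cycles n. itinerary_of n t = w} = {(\<pi>, e1, e2, x)}"
  proof (intro equalityI subsetI)
    fix t assume "t \<in> {t \<in> marked_cycles n. itinerary_of n t = w}"
    moreover obtain \<pi>' e1' e2' x' where t_def: "t = (\<pi>', e1', e2', x')" by (cases t)
    ultimately have "marked_cycle n \<pi>' e1' e2' x'" "itinerary n \<pi>' e1' e2' x' = w"
      unfolding marked_cycles_def itinerary_of_def by simp_all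
    then have "(\<pi>, e1, e2, x) = t"
      using itinerary_inj_primitive[OF t(1)] t(2) assms(3) t_def by simp
    then show "t \<in> {(\<pi>, e1, e2, x)}" by simp
  qed (use t in \<open>simp add: marked_cycles_def itinerary_of_def\<close>)
  then show ?thesis by simp
qed

lemma card_itinerary_fiber_square:
  assumes "n = 2 * m" "0 < m" "q \<in> words 3 m" "primitive_word q"
    "odd (o_sig [Minus, Plus, Minus] q)"
  shows "card {t \<in> marked_cycles n. itinerary_of n t = q @ q} = 2"
proof -
  have lq: "length q = m" and letters: "set q \<subseteq> {0..<3}"
    using assms(3) unfolding words_def by auto
  have "reversals (cyc_nth (q @ q)) 0 (length q) = length (filter (\<lambda>c. c \<noteq> 1) q)"
    by (rule reversals_conv_list) (simp add: cyc_nth_def nth_append)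
  then have "odd (reversals (cyc_nth (q @ q)) 0 m)"
    using o_sig_mpm[OF letters] assms(5) lq by simp
  then interpret square_word q m using assms(2,4) lq letters by unfold_locales
  obtain \<pi> e1 e2 x where t: "marked_cycle n \<pi> e1 e2 x" "itinerary n \<pi> e1 e2 x = q @ q"
    using realizable_word.exists_marked_cycle[OF realizable_word_square] lq assms(1)
    by (metis length_append mult_2)
  interpret mc: marked_cycle n \<pi> e1 e2 x by (rule t(1))
  define x' where "x' = (\<pi> ^^ m) x"
  have t': "marked_cycle n \<pi> e1 e2 x'" and w': "itinerary n \<pi> e1 e2 x' = q @ q"
    using mc.antipode_marked_cycle[OF assms(1) t(2) lq] unfolding x'_def by simp_all
  have "x \<noteq> x'" using mc.p_eq_iff[of 0 m] assms(1,2) by (simp add: x'_def)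
  have "(\<pi> ^^ m) x' = x"
    using mc.p_eq_iff[of "m + m" 0] assms(1) by (simp add: x'_def funpow_add mult_2)
  have "{t \<in> marked_cycles n. itinerary_of n t = q @ q} = {(\<pi>, e1, e2, x), (\<pi>, e1, e2, x')}"
  proof (intro equalityI subsetI)
    fix t assume "t \<in> {t \<in> marked_cycles n. itinerary_of n t = q @ q}"
    moreover obtain \<pi>'' e1'' e2'' x'' where t_def: "t = (\<pi>'', e1'', e2'', x'')" by (cases t)
    ultimately have t'': "marked_cycle n \<pi>'' e1'' e2'' x''" "itinerary n \<pi>'' e1'' e2'' x'' = q @ q"
      unfolding marked_cycles_def itinerary_of_def by simp_all
    consider "x < (\<pi> ^^ m) x \<longleftrightarrow> x'' < (\<pi>'' ^^ m) x''"
      | "x' < (\<pi> ^^ m) x' \<longleftrightarrow> x'' < (\<pi>'' ^^ m) x''"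
      using \<open>(\<pi> ^^ m) x' = x\<close> \<open>x \<noteq> x'\<close> unfolding x'_def by fastforce
    then show "t \<in> {(\<pi>, e1, e2, x), (\<pi>, e1, e2, x')}"
    proof cases
      case 1
      then show ?thesis
        using itinerary_inj_square[OF t(1) t''(1) _ assms(1) t(2) lq assms(4)] t(2) t''(2) t_def
        by simp
    next
      case 2
      then show ?thesis
        using itinerary_inj_square[OF t' t''(1) _ assms(1) w' lq assms(4)] w' t''(2) t_def
        by simp
    qed
  qed (use t t' w' in \<open>auto simp: marked_cycles_def itinerary_of_def\<close>)
  then show ?thesis using \<open>x \<noteq> x'\<close> by simp
qed

definition odd_primitive_words :: "nat \<Rightarrow> nat list set" where
  "odd_primitive_words m = {s \<in> words 3 m. primitive_word s \<and> odd (o_sig [Minus, Plus, Minus] s)}"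

definition square_words :: "nat \<Rightarrow> nat list set" where
  "square_words n = (if even n then (\<lambda>q. q @ q) ` odd_primitive_words (n div 2) else {})"

lemma itinerary_of_cases:
  assumes "t \<in> marked_cycles n"
  shows "itinerary_of n t \<in> {s \<in> words 3 n. primitive_word s} \<union> square_words n"
proof -
  obtain \<pi> e1 e2 x where t: "t = (\<pi>, e1, e2, x)" by (cases t)
  then have mc: "marked_cycle n \<pi> e1 e2 x" using assms unfolding marked_cycles_def by simp
  define w where "w = itinerary n \<pi> e1 e2 x"
  have w: "w \<in> words 3 n"
    using marked_cycle.length_itinerary[OF mc] marked_cycle.set_itinerary[OF mc]
    unfolding words_def w_def by simp
  consider "primitive_word w" | m where "n = 2 * m" "w = take m w @ take m w"
    "primitive_word (take m w)" "odd (reversals (\<lambda>k. segment_label e1 e2 ((\<pi> ^^ k) x)) 0 m)"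
    using marked_cycle.itinerary_primitive_or_square[OF mc] unfolding w_def by blast
  then show ?thesis
  proof cases
    case 1
    then show ?thesis using w t unfolding itinerary_of_def w_def by simp
  next
    case (2 m)
    have q: "take m w \<in> words 3 m" "length (take m w) = m"
      using w 2(1) unfolding words_def by (auto dest: in_set_takeD)
    have "reversals (\<lambda>k. segment_label e1 e2 ((\<pi> ^^ k) x)) 0 (length (take m w)) =
        length (filter (\<lambda>c. c \<noteq> 1) (take m w))"
      using marked_cycle.W_conv_itinerary[OF mc] 2(1) q(2)
      by (intro reversals_conv_list) (simp add: w_def)
    then have "odd (o_sig [Minus, Plus, Minus] (take m w))"
      using 2(4) q o_sig_mpm[of "take m w"] unfolding words_def by simp
    then have "take m w \<in> odd_primitive_words m"
      using q(1) 2(3) unfolding odd_primitive_words_def by simp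
    then have "w \<in> square_words n"
      unfolding square_words_def using 2(1,2) by (auto intro: image_eqI)
    then show ?thesis using t unfolding itinerary_of_def w_def by simp
  qed
qed

lemma card_marked_cycles_by_itinerary:
  assumes "3 \<le> n"
  shows "card (marked_cycles n) =
    card {s \<in> words 3 n. primitive_word s} + 2 * card (square_words n)"
proof -
  define A where "A = {s \<in> words 3 n. primitive_word s}"
  define F where "F w = {t \<in> marked_cycles n. itinerary_of n t = w}" for w
  have finite: "finite A" "finite (square_words n)"
    unfolding A_def square_words_def odd_primitive_words_def using finite_words by simp_all
  have "A \<inter> square_words n = {}"
    unfolding A_def square_words_def using primitive_word_append_self by auto
  have card_A: "w \<in> A \<Longrightarrow> card (F w) = 1" for w
    unfolding F_def A_def using card_itinerary_fiber_primitive[OF assms] by simp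
  have card_B: "card (F w) = 2" if w: "w \<in> square_words n" for w
  proof -
    obtain q where "even n" "q \<in> odd_primitive_words (n div 2)" "w = q @ q"
      using w unfolding square_words_def by (cases "even n") auto
    then show ?thesis
      using card_itinerary_fiber_square[of n "n div 2" q] assms
      unfolding F_def odd_primitive_words_def by simp
  qed
  have finite_F: "finite (F w)" if "w \<in> A \<union> square_words n" for w
    using that card_A card_B by (intro card_ge_0_finite) fastforce
  have "marked_cycles n = (\<Union>w \<in> A \<union> square_words n. F w)"
    using itinerary_of_cases unfolding F_def A_def by blast
  then have "card (marked_cycles n) = (\<Sum>w \<in> A \<union> square_words n. card (F w))"
    by (simp only:) (rule card_UN_disjoint, use finite finite_F in \<open>auto simp: F_def\<close>)
  also have "\<dots> = (\<Sum>w \<in> A. card (F w)) + (\<Sum>w \<in> square_words n. card (F w))"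
    using finite \<open>A \<inter> square_words n = {}\<close> by (simp add: sum.union_disjoint)
  also have "\<dots> = card A + 2 * card (square_words n)"
    using card_A card_B by simp
  finally show ?thesis unfolding A_def .
qed

lemma card_square_words:
  assumes "n = 2 * m" "0 < m"
  shows "card (square_words n) = m * L_sig 3 (real n / 2) [Minus, Plus, Minus]"
proof -
  have "inj_on (\<lambda>q. q @ q) (odd_primitive_words m)"
    by (rule inj_onI) (auto simp: odd_primitive_words_def words_def)
  then have "card (square_words n) = card (odd_primitive_words m)"
    unfolding square_words_def using assms(1) by (simp add: card_image)
  also have "\<dots> = m * L_sig 3 (real n / 2) [Minus, Plus, Minus]"
    using card_primitive_words_rotation_invariant[OF assms(2), of "\<lambda>s. odd (o_sig _ s)"]
      o_sig_rotate L_sig_half_even assms(1)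
    unfolding odd_primitive_words_def by simp
  finally show ?thesis .
qed

theorem theorem3p2:
  fixes n :: nat
  assumes "n \<ge> 3"
  shows "real (c4 n) = real (L_star 3 n [Minus, Plus, Minus]) / 4"
proof -
  have card_primitive: "card {s \<in> words 3 n. primitive_word s} = n * L 3 n"
    using card_primitive_words_rotation_invariant[of n "\<lambda>_. True" 3] assms unfolding L_def by simp
  have "n * (4 * c4 n) = n * L_star 3 n [Minus, Plus, Minus]"
  proof (cases "even n")
    case True
    then obtain m where "n = 2 * m" "0 < m"
      using assms by (metis evenE gr0I mult_0_right not_numeral_le_zero)
    then show ?thesis
      using card_marked_cycles[OF assms] card_marked_cycles_by_itinerary[OF assms]
        card_primitive card_square_words
      unfolding L_star_def by (simp add: algebra_simps)
  next
    case False
    then show ?thesis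
      using card_marked_cycles[OF assms] card_marked_cycles_by_itinerary[OF assms]
        card_primitive L_sig_half_odd[OF False]
      unfolding L_star_def square_words_def by auto
  qed
  then have "4 * c4 n = L_star 3 n [Minus, Plus, Minus]" using assms by simp
  then show ?thesis by simp
qed

end
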